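(* Let $g\in K\{\{x\}\}$ with $\mathrm{ord}_x(g)\ge1$ and $g'=1+g$, where $g'=\frac{d}{dx}g$ and $1=1_P$. Then for every $f\in K\{\{x\}\}$, $$\frac{d}{dx}\big(f(g(x))\big)=f'(g(x))+\Big(\big(x\tfrac{d}{dx}\big)(f)\Big)(g(x))=\Big(\big((1+x)\tfrac{d}{dx}\big)(f)\Big)(g(x)).$$
   Context: Let $K$ be a field and let $x\neq y$ be two symbols. A finite planar reduced rooted tree is a finite rooted tree in which the children of each vertex are linearly ordered and no vertex has exactly one child; its leaves are the vertices without children. $P(x,y)$ is the set of isomorphism classes of pairs $S=(T,\lambda)$, $T$ a finite planar reduced rooted tree, $\lambda:L(T)\to\{x,y\}$ a labeling of its leaves; $\deg_x(S)=\#\lambda^{-1}(x)$. $P'(x,y)=P(x,y)\cup\{1_P\}$ with $1_P$ the empty tree. For $m\ge2$, $\bullet_m(S_1,\dots,S_m)$ is the tree with a new root whose ordered children are the roots of $S_1,\dots,S_m$, labelings inherited; on $P'(x,y)$ occurrences of $1_P$ are deleted, with $\bullet_1(S)=S$, $\bullet_0()=1_P$. $K\{\{x,y\}$: all $f=\sum_{S\in P'(x,y)}c_S(f)S$ such that for each $n$ only finitely many $S$ with $\deg_x(S)=n$ have $c_S(f)\ne0$; products $f_1\cdot\ldots\cdot f_m=\bullet_m(f_1,\dots,f_m)$ with $c_S(f_1\cdot\ldots\cdot f_m)=\sum_{\bullet_m(S_1,\dots,S_m)=S}c_{S_1}(f_1)\cdots c_{S_m}(f_m)$; $x$-adic topology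 from $\mathrm{ord}_x(f)=\min\{\deg_x S:c_S(f)\ne0\}$. $K\{\{x\}\}$: series supported on $1_P$ and trees with all leaves labeled $x$. For $g,h\in K\{\{x,y\}$ with $\mathrm{ord}_x(g)\ge1$, $\varphi_{(g,h)}$ denotes the unique $x$-adically continuous $K$-linear map preserving $1_P$ and all $\bullet_m$ with $x\mapsto g$, $y\mapsto h$; for $f\in K\{\{x\}\}$, $f(g(x))$ denotes $\varphi_{(g,h)}(f)$ (independent of $h$). The universal derivation $d:K\{\{x\}\}\to K\{\{x,y\}$ is the continuous $K$-linear map with $d(1_P)=0$ and, for a tree $S=(T,\lambda)$ with all leaves $l_1,\dots,l_m$ labeled $x$, $d(S)=\sum_{i=1}^m(T,\lambda^{(i)})$ with $\lambda^{(i)}$ labeling $l_i$ by $y$ and the other leaves by $x$. For $h\in K\{\{x\}\}$, the derivation $h\frac{d}{dx}:K\{\{x\}\}\to K\{\{x\}\}$ is defined as $\varphi_{(x,h)}\circ d$ (note $(h\frac{d}{dx})(f)\neq h\cdot\frac{d}{dx}(f)$ in general); in particular $\frac{d}{dx}=\varphi_{(x,1_P)}\circ d$, and $f'=\frac{d}{dx}f$. For instance $(x\frac{d}{dx})(T)=nT$ for a tree $T$ with $n$ leaves. *)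

theory Defs
  imports Main
begin

datatype lbl = LX | LY

datatype ptree = Leaf lbl | Node "ptree list"

text \<open>Reduced: no vertex has exactly one child (and we also exclude childless
  internal nodes, whose only childless vertices are leaves). Together with the
  empty tree (None) these represent P'(x,y).\<close>
fun reduced :: "ptree \<Rightarrow> bool" where
  "reduced (Leaf l) = True"
| "reduced (Node ts) = (2 \<le> length ts \<and> (\<forall>t\<in>set ts. reduced t))"

definition wfP :: "ptree option \<Rightarrow> bool" where
  "wfP S = (case S of None \<Rightarrow> True | Some t \<Rightarrow> reduced t)"

fun leaves :: "ptree \<Rightarrow> lbl list" where
  "leaves (Leaf l) = [l]"
| "leaves (Node ts) = concat (map leaves ts)"

definition degx :: "ptree option \<Rightarrow> nat" where
  "degx S = (case S of None \<Rightarrow> 0 | Some t \<Rightarrow> count_list (leaves t) LX)"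

definition only_x :: "ptree option \<Rightarrow> bool" where
  "only_x S = (case S of None \<Rightarrow> True | Some t \<Rightarrow> LY \<notin> set (leaves t))"

definition bulletP :: "ptree option list \<Rightarrow> ptree option" where
  "bulletP Ss = (let ts = [t. Some t \<leftarrow> Ss] in
     (case ts of [] \<Rightarrow> None | [t] \<Rightarrow> Some t | _ \<Rightarrow> Some (Node ts)))"

type_synonym 'k ser = "ptree option \<Rightarrow> 'k"

definition KXY :: "('k::field) ser set" where
  "KXY = {f. (\<forall>S. \<not> wfP S \<longrightarrow> f S = 0) \<and> (\<forall>n. finite {S. f S \<noteq> 0 \<and> degx S = n})}"

definition KX :: "('k::field) ser set" where
  "KX = {f \<in> KXY. \<forall>S. f S \<noteq> 0 \<longrightarrow> only_x S}"

text \<open>ord_x(f) \<ge> n  (with ord_x(0) = \<infinity>)\<close>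
definition ordx_ge :: "('k::field) ser \<Rightarrow> nat \<Rightarrow> bool" where
  "ordx_ge f n = (\<forall>S. f S \<noteq> 0 \<longrightarrow> n \<le> degx S)"

definition oneP :: "('k::field) ser" where
  "oneP = (\<lambda>S. if S = None then 1 else 0)"

definition xser :: "('k::field) ser" where
  "xser = (\<lambda>S. if S = Some (Leaf LX) then 1 else 0)"

definition ser_add :: "('k::field) ser \<Rightarrow> 'k ser \<Rightarrow> 'k ser" where
  "ser_add f g = (\<lambda>S. f S + g S)"

definition ser_zero :: "('k::field) ser" where
  "ser_zero = (\<lambda>S. 0)"

definition ser_prod :: "('k::field) ser list \<Rightarrow> 'k ser" where
  "ser_prod fs = (\<lambda>S. \<Sum>Ss\<in>{Ss. length Ss = length fs \<and> (\<forall>s\<in>set Ss. wfP s) \<and> bulletP Ss = S}.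
                        \<Prod>i<length fs. (fs ! i) (Ss ! i))"

fun phi_tree :: "('k::field) ser \<Rightarrow> 'k ser \<Rightarrow> ptree \<Rightarrow> 'k ser" where
  "phi_tree g h (Leaf LX) = g"
| "phi_tree g h (Leaf LY) = h"
| "phi_tree g h (Node ts) = ser_prod (map (phi_tree g h) ts)"

definition phi_P :: "('k::field) ser \<Rightarrow> 'k ser \<Rightarrow> ptree option \<Rightarrow> 'k ser" where
  "phi_P g h S = (case S of None \<Rightarrow> oneP | Some t \<Rightarrow> phi_tree g h t)"

text \<open>phi_(g,h)(f) = sum_S c_S(f) phi_(g,h)(S), the x-adically convergent sum
  (for ord_x(g) \<ge> 1 only finitely many terms contribute to each coefficient).\<close>
definition phi :: "('k::field) ser \<Rightarrow> 'k ser \<Rightarrow> 'k ser \<Rightarrow> 'k ser" where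
  "phi g h f = (\<lambda>T. \<Sum>S\<in>{S. f S \<noteq> 0 \<and> phi_P g h S T \<noteq> 0}. f S * phi_P g h S T)"

text \<open>f(g(x)) = phi_(g,h)(f); independent of h for f in K{{x}}; we take h = 0.\<close>
definition subst :: "('k::field) ser \<Rightarrow> 'k ser \<Rightarrow> 'k ser" where
  "subst f g = phi g ser_zero f"

text \<open>Universal derivation on trees: sum over x-labelled leaves of the relabelling
  of that leaf by y (as a list, with multiplicity, in leaf order).\<close>
fun dtree :: "ptree \<Rightarrow> ptree list" and dlist :: "ptree list \<Rightarrow> ptree list list" where
  "dtree (Leaf LX) = [Leaf LY]"
| "dtree (Leaf LY) = []"
| "dtree (Node ts) = map Node (dlist ts)"
| "dlist [] = []"
| "dlist (t # ts) = map (\<lambda>t'. t' # ts) (dtree t) @ map (\<lambda>ts'. t # ts') (dlist ts)"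

definition dP :: "ptree option \<Rightarrow> ptree option list" where
  "dP S = (case S of None \<Rightarrow> [] | Some t \<Rightarrow> map Some (dtree t))"

definition dser :: "('k::field) ser \<Rightarrow> 'k ser" where
  "dser f = (\<lambda>T. \<Sum>S\<in>{S. f S \<noteq> 0 \<and> T \<in> set (dP S)}. f S * of_nat (count_list (dP S) T))"

definition hder :: "('k::field) ser \<Rightarrow> 'k ser \<Rightarrow> 'k ser" where
  "hder h f = phi xser h (dser f)"

definition ddx :: "('k::field) ser \<Rightarrow> 'k ser" where
  "ddx f = hder oneP f"

end

theory Submission
  imports Defs
begin

(* On a tree S with n leaves, all labelled x, the derivation d/dx yields the sum of the n trees
   obtained from S by deleting one leaf, and x d/dx multiplies S by n.  Every tree in d(S) has
   exactly one leaf labelled y, so h d/dx is additive in h, and the second identity follows from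
   the first.  For the first, d/dx satisfies the Leibniz rule for the products bullet_m; an
   induction over S, using g' = 1 + g at the leaves, gives
   d/dx (S(g)) = (d/dx S)(g) + n S(g), and summing over S with the coefficients of f gives the
   claim.  All sums are finite coefficientwise: as ord_x g >= 1, the coefficient of T in S(g)
   vanishes unless S has at most as many leaves as T. *)

section \<open>Grafting and products of series\<close>

definition trees_of :: "ptree option list \<Rightarrow> ptree list" where
  "trees_of Os = [t. Some t \<leftarrow> Os]"

lemma trees_of_simps [simp]:
  "trees_of [] = []" "trees_of (None # Os) = trees_of Os"
  "trees_of (Some t # Os) = t # trees_of Os" "trees_of (Os @ Os') = trees_of Os @ trees_of Os'"
  by (simp_all add: trees_of_def)

lemma trees_of_map_Some [simp]: "trees_of (map Some ts) = ts"
  by (induct ts) auto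

lemma set_trees_of: "t \<in> set (trees_of Os) \<longleftrightarrow> Some t \<in> set Os"
  by (induct Os) (auto simp: trees_of_def split: option.splits)

definition graft :: "ptree list \<Rightarrow> ptree option" where
  "graft ts = (case ts of [] \<Rightarrow> None | [t] \<Rightarrow> Some t | _ \<Rightarrow> Some (Node ts))"

lemma bulletP_eq_graft: "bulletP Os = graft (trees_of Os)"
  by (simp add: bulletP_def graft_def trees_of_def Let_def)

lemma bulletP_single [simp]: "bulletP [S] = S"
  by (cases S) (auto simp: bulletP_def)

lemma bulletP_map_Some_Node:
  "2 \<le> length ts \<Longrightarrow> bulletP (map Some ts) = Some (Node ts)"
  by (cases ts rule: remdups_adj.cases) (auto simp: bulletP_eq_graft graft_def)

lemma wfP_simps [simp]: "wfP None" "wfP (Some t) = reduced t"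
  by (simp_all add: wfP_def)

lemma only_x_simps [simp]: "only_x None" "only_x (Some t) = (LY \<notin> set (leaves t))"
  by (simp_all add: only_x_def)

lemma wfP_graft: "\<forall>t\<in>set ts. reduced t \<Longrightarrow> wfP (graft ts)"
  by (cases ts rule: remdups_adj.cases) (auto simp: graft_def)

lemma wfP_bulletP: "\<forall>S\<in>set Os. wfP S \<Longrightarrow> wfP (bulletP Os)"
  unfolding bulletP_eq_graft by (rule wfP_graft) (force simp: set_trees_of)

fun leavesP :: "ptree option \<Rightarrow> lbl list" where
  "leavesP None = []"
| "leavesP (Some t) = leaves t"

definition nleavesP :: "ptree option \<Rightarrow> nat" where
  "nleavesP S = length (leavesP S)"

lemma only_x_iff_leavesP: "only_x S = (LY \<notin> set (leavesP S))"
  by (cases S) auto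

lemma leavesP_graft: "leavesP (graft ts) = concat (map leaves ts)"
  by (cases ts rule: remdups_adj.cases) (auto simp: graft_def)

lemma leavesP_bulletP: "leavesP (bulletP Os) = concat (map leavesP Os)"
proof -
  have "concat (map leavesP Os) = concat (map leaves (trees_of Os))"
    by (induct Os) (auto simp: trees_of_def split: option.splits)
  then show ?thesis by (simp add: bulletP_eq_graft leavesP_graft)
qed

lemma length_concat_map_nth: "length (concat (map f xs)) = (\<Sum>i<length xs. length (f (xs ! i)))"
  by (simp add: length_concat sum_list_sum_nth atLeast0LessThan)

lemma nleavesP_bulletP: "nleavesP (bulletP Ss) = (\<Sum>i<length Ss. nleavesP (Ss ! i))"
  by (simp add: nleavesP_def leavesP_bulletP length_concat_map_nth)

lemma nleavesP_le_bulletP: "i < length Ss \<Longrightarrow> nleavesP (Ss ! i) \<le> nleavesP (bulletP Ss)"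
  unfolding nleavesP_bulletP by (rule member_le_sum) auto

lemma wfP_only_x_bulletP:
  "\<forall>S\<in>set Os. wfP S \<and> only_x S \<Longrightarrow> wfP (bulletP Os) \<and> only_x (bulletP Os)"
  using wfP_bulletP[of Os] by (auto simp: only_x_iff_leavesP leavesP_bulletP)

definition factorizations :: "nat \<Rightarrow> ptree option \<Rightarrow> ptree option list set" where
  "factorizations m T = {Ss. length Ss = m \<and> (\<forall>S\<in>set Ss. wfP S) \<and> bulletP Ss = T}"

lemma factorizations_iff:
  "Ss \<in> factorizations m T \<longleftrightarrow> length Ss = m \<and> (\<forall>S\<in>set Ss. wfP S) \<and> bulletP Ss = T"
  by (simp add: factorizations_def)

definition factor_candidates :: "ptree option \<Rightarrow> ptree option set" where
  "factor_candidates T = insert None (insert T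
     (case T of Some (Node ts) \<Rightarrow> Some ` set ts | _ \<Rightarrow> {}))"

lemma factor_in_candidates:
  assumes "S \<in> set Os"
  shows "S \<in> factor_candidates (bulletP Os)"
proof (cases S)
  case (Some t)
  then have "t \<in> set (trees_of Os)" using assms by (simp add: set_trees_of)
  then show ?thesis using Some unfolding bulletP_eq_graft graft_def factor_candidates_def
    by (cases "trees_of Os" rule: remdups_adj.cases) auto
qed (simp add: factor_candidates_def)

lemma finite_factorizations: "finite (factorizations m T)"
proof (rule finite_subset)
  show "factorizations m T \<subseteq> {Ss. set Ss \<subseteq> factor_candidates T \<and> length Ss = m}"
    by (auto simp: factorizations_iff factor_in_candidates)
  show "finite {Ss. set Ss \<subseteq> factor_candidates T \<and> length Ss = m}"
    by (rule finite_lists_length_eq)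
       (auto simp: factor_candidates_def split: option.splits ptree.splits)
qed

definition coeff_prod :: "('k::field) ser list \<Rightarrow> ptree option list \<Rightarrow> 'k" where
  "coeff_prod fs Ss = (\<Prod>i<length fs. (fs ! i) (Ss ! i))"

definition coeff_prod_except :: "('k::field) ser list \<Rightarrow> nat \<Rightarrow> ptree option list \<Rightarrow> 'k" where
  "coeff_prod_except fs j Ss = (\<Prod>i\<in>{..<length fs} - {j}. (fs ! i) (Ss ! i))"

lemma ser_prod_eq_sum_factorizations:
  "ser_prod fs T = (\<Sum>Ss\<in>factorizations (length fs) T. coeff_prod fs Ss)"
  by (simp add: ser_prod_def factorizations_def coeff_prod_def)

lemma coeff_prod_zip:
  "length Ss = length fs \<Longrightarrow> coeff_prod fs Ss = prod_list (map (\<lambda>(f, S). f S) (zip fs Ss))"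
proof (induct fs arbitrary: Ss)
  case Nil
  then show ?case by (simp add: coeff_prod_def)
next
  case (Cons f fs)
  then obtain S Ss' where "Ss = S # Ss'" by (cases Ss) auto
  with Cons show ?case
    by (simp add: coeff_prod_def prod.lessThan_Suc_shift del: prod.lessThan_Suc)
qed

lemma coeff_prod_update:
  assumes "j < length fs"
  shows "coeff_prod (fs[j := h]) Ss = h (Ss ! j) * coeff_prod_except fs j Ss"
proof -
  have "coeff_prod (fs[j := h]) Ss
      = (fs[j := h] ! j) (Ss ! j) * (\<Prod>i\<in>{..<length fs} - {j}. (fs[j := h] ! i) (Ss ! i))"
    using assms by (simp add: coeff_prod_def prod.remove[of _ j])
  then show ?thesis
    using assms by (simp add: coeff_prod_except_def)
qed

lemma coeff_prod_split:
  "j < length fs \<Longrightarrow> coeff_prod fs Ss = (fs ! j) (Ss ! j) * coeff_prod_except fs j Ss"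
  using coeff_prod_update[of j fs "fs ! j" Ss] by simp

lemma coeff_prod_except_update: "coeff_prod_except fs j (Ss[j := S]) = coeff_prod_except fs j Ss"
  unfolding coeff_prod_except_def by (rule prod.cong) auto

lemma coeff_prod_nonzero: "coeff_prod fs Ss \<noteq> 0 \<Longrightarrow> i < length fs \<Longrightarrow> (fs ! i) (Ss ! i) \<noteq> 0"
  unfolding coeff_prod_def by auto

lemma ser_prod_nonzero:
  "ser_prod fs T \<noteq> 0 \<Longrightarrow> \<exists>Ss\<in>factorizations (length fs) T. \<forall>i<length fs. (fs ! i) (Ss ! i) \<noteq> 0"
  unfolding ser_prod_eq_sum_factorizations by (metis coeff_prod_nonzero sum.neutral)

lemma ser_prod_nonzero_wfP: "ser_prod fs T \<noteq> 0 \<Longrightarrow> wfP T"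
  using ser_prod_nonzero wfP_bulletP by (fastforce simp: factorizations_iff)

definition tree_ser :: "ptree option \<Rightarrow> ('k::field) ser" where
  "tree_ser S = (\<lambda>T. if T = S then 1 else 0)"

lemma xser_eq_tree_ser: "xser = tree_ser (Some (Leaf LX))"
  by (auto simp: xser_def tree_ser_def)

lemma oneP_eq_tree_ser: "oneP = tree_ser None"
  by (auto simp: oneP_def tree_ser_def)

lemma coeff_prod_tree_ser:
  assumes "length Ss = length Us"
  shows "coeff_prod (map tree_ser Us) Ss = (if Ss = Us then 1 else 0)"
proof (cases "Ss = Us")
  case False
  then obtain i where "i < length Us" "Ss ! i \<noteq> Us ! i"
    using assms nth_equalityI by metis
  then show ?thesis
    unfolding coeff_prod_def by (auto simp: tree_ser_def prod_zero_iff intro!: bexI[of _ i])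
qed (simp add: coeff_prod_def tree_ser_def)

lemma ser_prod_tree_ser:
  assumes "\<forall>S\<in>set Us. wfP S"
  shows "ser_prod (map tree_ser Us) = tree_ser (bulletP Us)"
proof
  fix T
  have "ser_prod (map tree_ser Us) T
      = (\<Sum>Ss\<in>factorizations (length Us) T. if Ss = Us then 1 else 0)"
    unfolding ser_prod_eq_sum_factorizations
    by (auto intro!: sum.cong simp: coeff_prod_tree_ser factorizations_iff)
  also have "\<dots> = tree_ser (bulletP Us) T"
    using assms by (auto simp: finite_factorizations tree_ser_def factorizations_iff)
  finally show "ser_prod (map tree_ser Us) T = tree_ser (bulletP Us) T" .
qed

lemma ser_prod_Nil: "ser_prod [] = oneP"
proof
  fix T
  have "factorizations 0 T = (if T = None then {[]} else {})"
    by (auto simp: factorizations_iff bulletP_def)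
  then show "ser_prod [] T = oneP T"
    by (simp add: ser_prod_eq_sum_factorizations coeff_prod_def oneP_def)
qed

definition wf_ser :: "('k::field) ser \<Rightarrow> bool" where
  "wf_ser F = (\<forall>S. \<not> wfP S \<longrightarrow> F S = 0)"

lemma ser_prod_single: "wf_ser F \<Longrightarrow> ser_prod [F] = F"
proof
  fix T assume "wf_ser F"
  have "factorizations 1 T = (if wfP T then {[T]} else {})"
    by (auto simp: factorizations_iff length_Suc_conv)
  then show "ser_prod [F] T = F T"
    using \<open>wf_ser F\<close> by (simp add: ser_prod_eq_sum_factorizations coeff_prod_def wf_ser_def)
qed

lemma bij_betw_insert_None:
  assumes "n \<le> m"
  shows "bij_betw (\<lambda>Rs. take n Rs @ None # drop n Rs)
           (factorizations m T) {Ss \<in> factorizations (Suc m) T. Ss ! n = None}"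
proof (rule bij_betw_byWitness[where f' = "\<lambda>Ss. take n Ss @ drop (Suc n) Ss"])
  have set_insert: "set (take n Rs @ None # drop n Rs) = insert None (set Rs)" for Rs
    by (metis Un_insert_right append_take_drop_id list.simps(15) set_append)
  have bulletP_insert: "bulletP (take n Rs @ None # drop n Rs) = bulletP Rs" for Rs
    unfolding bulletP_eq_graft by (metis append_take_drop_id trees_of_simps(2,4))
  have reinsert: "take n Ss @ None # drop (Suc n) Ss = Ss"
    if "Ss \<in> factorizations (Suc m) T" "Ss ! n = None" for Ss
    using that assms id_take_nth_drop[of n Ss] by (auto simp: factorizations_iff)
  show "\<forall>Rs\<in>factorizations m T. take n (take n Rs @ None # drop n Rs)
          @ drop (Suc n) (take n Rs @ None # drop n Rs) = Rs"
    using assms by (auto simp: factorizations_iff)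
  show "\<forall>Ss\<in>{Ss \<in> factorizations (Suc m) T. Ss ! n = None}.
          take n (take n Ss @ drop (Suc n) Ss) @ None # drop n (take n Ss @ drop (Suc n) Ss) = Ss"
    using assms reinsert by (auto simp: factorizations_iff)
  show "(\<lambda>Rs. take n Rs @ None # drop n Rs) ` factorizations m T
          \<subseteq> {Ss \<in> factorizations (Suc m) T. Ss ! n = None}"
  proof safe
    fix Rs assume Rs: "Rs \<in> factorizations m T"
    then show "take n Rs @ None # drop n Rs \<in> factorizations (Suc m) T"
      unfolding factorizations_iff set_insert bulletP_insert by simp
    show "(take n Rs @ None # drop n Rs) ! n = None"
      using Rs assms by (simp add: factorizations_iff nth_append)
  qed
  show "(\<lambda>Ss. take n Ss @ drop (Suc n) Ss) ` {Ss \<in> factorizations (Suc m) T. Ss ! n = None}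
          \<subseteq> factorizations m T"
  proof safe
    fix Ss assume Ss: "Ss \<in> factorizations (Suc m) T" "Ss ! n = None"
    then have "set (take n Ss @ drop (Suc n) Ss) \<subseteq> set Ss"
              "bulletP (take n Ss @ drop (Suc n) Ss) = bulletP Ss"
      using set_insert[of "take n Ss @ drop (Suc n) Ss"] bulletP_insert[of "take n Ss @ drop (Suc n) Ss"]
        reinsert assms by (auto simp: factorizations_iff)
    then show "take n Ss @ drop (Suc n) Ss \<in> factorizations m T"
      using Ss assms by (auto simp: factorizations_iff)
  qed
qed

lemma coeff_prod_insert_oneP:
  assumes "length Rs = length xs" "length Rs' = length ys"
  shows "coeff_prod (xs @ oneP # ys) (Rs @ None # Rs') = coeff_prod (xs @ ys) (Rs @ Rs')"
  using assms by (simp add: coeff_prod_zip zip_append oneP_def)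

lemma ser_prod_remove_oneP: "ser_prod (xs @ oneP # ys) = ser_prod (xs @ ys)"
proof
  fix T
  let ?fs = "xs @ oneP # ys" and ?n = "length xs" and ?m = "length (xs @ ys)"
  let ?F = "factorizations (Suc ?m) T"
  have "ser_prod ?fs T = (\<Sum>Ss\<in>?F. coeff_prod ?fs Ss)"
    by (simp add: ser_prod_eq_sum_factorizations)
  also have "\<dots> = (\<Sum>Ss\<in>{Ss\<in>?F. Ss ! ?n = None}. coeff_prod ?fs Ss)"
    by (rule sum.mono_neutral_right)
       (auto simp: finite_factorizations coeff_prod_split[of ?n] oneP_def)
  also have "\<dots> = (\<Sum>Rs\<in>factorizations ?m T. coeff_prod ?fs (take ?n Rs @ None # drop ?n Rs))"
    by (rule sum.reindex_bij_betw[symmetric], rule bij_betw_insert_None) simp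
  also have "\<dots> = (\<Sum>Rs\<in>factorizations ?m T. coeff_prod (xs @ ys) Rs)"
    by (rule sum.cong) (auto simp: factorizations_iff coeff_prod_insert_oneP)
  finally show "ser_prod ?fs T = ser_prod (xs @ ys) T"
    by (simp add: ser_prod_eq_sum_factorizations)
qed

lemma wf_ser_ser_prod: "wf_ser (ser_prod fs)"
  using ser_prod_nonzero_wfP wf_ser_def by blast

lemma wf_ser_phi_tree: "wf_ser g \<Longrightarrow> wf_ser h \<Longrightarrow> wf_ser (phi_tree g h t)"
proof (cases t)
  case (Leaf l)
  then show "wf_ser g \<Longrightarrow> wf_ser h \<Longrightarrow> wf_ser (phi_tree g h t)" by (cases l) auto
qed (simp add: wf_ser_ser_prod)

lemma ser_prod_map_phi_P:
  "ser_prod (fs @ map (phi_P g h) Os) = ser_prod (fs @ map (phi_tree g h) (trees_of Os))"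
proof (induct Os arbitrary: fs)
  case (Cons S Os)
  show ?case
  proof (cases S)
    case None
    then show ?thesis using Cons[of fs] by (simp add: phi_P_def ser_prod_remove_oneP)
  next
    case (Some t)
    then show ?thesis using Cons[of "fs @ [phi_tree g h t]"] by (simp add: phi_P_def)
  qed
qed simp

lemma phi_P_bulletP:
  assumes "wf_ser g" "wf_ser h"
  shows "phi_P g h (bulletP Os) = ser_prod (map (phi_P g h) Os)"
proof -
  have "phi_P g h (graft ts) = ser_prod (map (phi_tree g h) ts)" for ts
    using ser_prod_single[OF wf_ser_phi_tree[OF assms]]
    by (cases ts rule: remdups_adj.cases) (simp_all add: graft_def phi_P_def ser_prod_Nil)
  then show ?thesis
    using ser_prod_map_phi_P[of "[]" g h Os] by (simp add: bulletP_eq_graft)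
qed

section \<open>Series supported on trees with all leaves labelled x\<close>

lemma reduced_leaves_nonempty: "reduced t \<Longrightarrow> leaves t \<noteq> []"
proof (induct t)
  case (Node ts)
  then obtain t where "t \<in> set ts" by (cases ts) auto
  then show ?case using Node by auto
qed simp

lemma sum_list_gt_member:
  fixes f :: "'a \<Rightarrow> nat"
  assumes "t \<in> set ts" "2 \<le> length ts" "\<forall>s\<in>set ts. 1 \<le> f s"
  shows "f t < sum_list (map f ts)"
proof -
  have "length (remove1 t ts) \<noteq> 0"
    using assms(1,2) by (simp add: length_remove1)
  then obtain s where s: "s \<in> set (remove1 t ts)"
    by (metis length_0_conv list.set_intros(1) neq_Nil_conv)
  then have "f s \<le> sum_list (map f (remove1 t ts))"
    by (simp add: member_le_sum_list)
  moreover have "1 \<le> f s"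
    using s assms(3) notin_set_remove1 by fastforce
  ultimately show ?thesis
    using sum_list_map_remove1[OF assms(1), of f] by linarith
qed

lemma length_leaves_child_less:
  assumes "reduced (Node ts)" "t \<in> set ts"
  shows "length (leaves t) < length (leaves (Node ts))"
  using sum_list_gt_member[OF assms(2), of "\<lambda>s. length (leaves s)"] assms reduced_leaves_nonempty
  by (simp add: length_concat comp_def Suc_le_eq)

lemma length_children_le_leaves:
  assumes "reduced (Node ts)"
  shows "length ts \<le> length (leaves (Node ts))"
proof -
  have "length ts = sum_list (map (\<lambda>s. 1::nat) ts)" by (simp add: sum_list_triv)
  also have "\<dots> \<le> sum_list (map (\<lambda>s. length (leaves s)) ts)"
    by (rule sum_list_mono) (use assms reduced_leaves_nonempty in \<open>auto simp: Suc_le_eq\<close>)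
  finally show ?thesis by (simp add: length_concat comp_def)
qed

lemma finite_reduced_leaves_le: "finite {t. reduced t \<and> length (leaves t) \<le> n}"
proof (induct n rule: less_induct)
  case (less n)
  show ?case
  proof (cases n)
    case 0
    then have "{t. reduced t \<and> length (leaves t) \<le> n} = {}"
      using reduced_leaves_nonempty by simp
    then show ?thesis by (simp only: finite.emptyI)
  next
    case (Suc m)
    let ?C = "{t. reduced t \<and> length (leaves t) \<le> m}"
    have sub: "{t. reduced t \<and> length (leaves t) \<le> n}
        \<subseteq> range Leaf \<union> Node ` {ts. set ts \<subseteq> ?C \<and> length ts \<le> n}"
    proof
      fix t assume t: "t \<in> {t. reduced t \<and> length (leaves t) \<le> n}"
      show "t \<in> range Leaf \<union> Node ` {ts. set ts \<subseteq> ?C \<and> length ts \<le> n}"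
      proof (cases t)
        case (Node ts)
        have "set ts \<subseteq> ?C"
          using t Node Suc length_leaves_child_less[of ts] by fastforce
        moreover have "length ts \<le> n"
          using t Node length_children_le_leaves[of ts] by simp
        ultimately show ?thesis using Node by blast
      qed simp
    qed
    have "finite (range Leaf)"
    proof -
      have "(UNIV :: lbl set) = {LX, LY}" by (auto intro: lbl.exhaust)
      then show ?thesis by (metis finite.emptyI finite.insertI finite_imageI)
    qed
    moreover have "finite {ts. set ts \<subseteq> ?C \<and> length ts \<le> n}"
      using less Suc by (intro finite_lists_length_le) simp
    ultimately show ?thesis
      using sub by (meson finite_UnI finite_imageI finite_subset)
  qed
qed

definition x_trees :: "nat \<Rightarrow> ptree option set" where
  "x_trees N = {S. wfP S \<and> only_x S \<and> nleavesP S \<le> N}"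

lemma finite_x_trees: "finite (x_trees N)"
proof (rule finite_subset)
  show "x_trees N \<subseteq> insert None (Some ` {t. reduced t \<and> length (leaves t) \<le> N})"
  proof
    fix S assume "S \<in> x_trees N"
    then show "S \<in> insert None (Some ` {t. reduced t \<and> length (leaves t) \<le> N})"
      by (cases S) (auto simp: x_trees_def nleavesP_def)
  qed
qed (simp add: finite_reduced_leaves_le)

definition x_ser :: "('k::field) ser \<Rightarrow> bool" where
  "x_ser F = (\<forall>S. F S \<noteq> 0 \<longrightarrow> wfP S \<and> only_x S)"

lemma KX_imp_x_ser: "f \<in> KX \<Longrightarrow> x_ser f"
  by (auto simp: KX_def KXY_def x_ser_def)

lemma x_ser_wf_ser: "x_ser F \<Longrightarrow> wf_ser F"
  by (auto simp: x_ser_def wf_ser_def)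

lemma x_ser_ser_add: "x_ser F \<Longrightarrow> x_ser G \<Longrightarrow> x_ser (ser_add F G)"
  unfolding x_ser_def ser_add_def by (metis add.left_neutral add.right_neutral)

lemma x_ser_ser_prod:
  assumes "\<forall>f\<in>set fs. x_ser f"
  shows "x_ser (ser_prod fs)"
  unfolding x_ser_def
proof (intro allI impI)
  fix T assume nz: "ser_prod fs T \<noteq> 0"
  from ser_prod_nonzero[OF nz] obtain Ss where Ss: "Ss \<in> factorizations (length fs) T"
    "\<forall>i<length fs. (fs ! i) (Ss ! i) \<noteq> 0" by blast
  have "wfP S \<and> only_x S" if "S \<in> set Ss" for S
  proof -
    obtain i where i: "i < length Ss" "S = Ss ! i" using \<open>S \<in> set Ss\<close> by (metis in_set_conv_nth)
    then have "fs ! i \<in> set fs" "(fs ! i) S \<noteq> 0" using Ss by (auto simp: factorizations_iff)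
    then show ?thesis using assms by (auto simp: x_ser_def)
  qed
  then show "wfP T \<and> only_x T"
    using Ss wfP_only_x_bulletP by (auto simp: factorizations_iff)
qed

lemma degx_le_nleavesP: "degx S \<le> nleavesP S"
  by (cases S) (auto simp: degx_def nleavesP_def count_le_length)

text \<open>Since \<open>ord\<^sub>x g \<ge> 1\<close>, every leaf of \<open>t\<close> contributes at least one leaf to each
  tree in the support of \<open>t(g)\<close>.\<close>

lemma phi_tree_nonzero:
  assumes g: "x_ser g" "ordx_ge g 1" and "phi_tree g ser_zero t T \<noteq> 0"
  shows "LY \<notin> set (leaves t) \<and> length (leaves t) \<le> nleavesP T \<and> wfP T \<and> only_x T"
  using assms(3)
proof (induct t arbitrary: T)
  case (Leaf l)
  show ?case
  proof (cases l)
    case LX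
    then have "g T \<noteq> 0" using Leaf by simp
    then show ?thesis using g degx_le_nleavesP[of T] LX by (force simp: x_ser_def ordx_ge_def)
  qed (use Leaf in \<open>simp add: ser_zero_def\<close>)
next
  case (Node ts)
  let ?G = "phi_tree g ser_zero"
  have nz: "ser_prod (map ?G ts) T \<noteq> 0" using Node.prems by simp
  from ser_prod_nonzero[OF nz] obtain Ss where Ss: "Ss \<in> factorizations (length ts) T"
    "\<forall>i<length ts. ?G (ts ! i) (Ss ! i) \<noteq> 0" by auto
  have IH: "LY \<notin> set (leaves (ts ! i)) \<and> length (leaves (ts ! i)) \<le> nleavesP (Ss ! i) \<and> only_x (Ss ! i)"
    if "i < length ts" for i
    using Node.hyps[of "ts ! i" "Ss ! i"] Ss that by auto
  have Ss_len: "length Ss = length ts" and T: "T = bulletP Ss"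
    using Ss by (simp_all add: factorizations_iff)
  have "length (leaves (Node ts)) = (\<Sum>i<length ts. length (leaves (ts ! i)))"
    by (simp add: length_concat_map_nth)
  also have "\<dots> \<le> (\<Sum>i<length ts. nleavesP (Ss ! i))"
    by (rule sum_mono) (use IH in auto)
  also have "\<dots> = nleavesP T"
    using T Ss_len nleavesP_bulletP by simp
  finally show ?case
    using IH Ss_len ser_prod_nonzero_wfP[OF nz]
    unfolding T only_x_iff_leavesP leavesP_bulletP by (auto simp: in_set_conv_nth)
qed

lemma phi_P_nonzero:
  assumes "x_ser g" "ordx_ge g 1" and "phi_P g ser_zero S T \<noteq> 0"
  shows "only_x S \<and> nleavesP S \<le> nleavesP T \<and> wfP T \<and> only_x T"
  using assms phi_tree_nonzero[OF assms(1,2)]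
  by (cases S) (auto simp: phi_P_def oneP_def nleavesP_def split: if_splits)

lemma x_ser_phi_tree: "x_ser g \<Longrightarrow> ordx_ge g 1 \<Longrightarrow> x_ser (phi_tree g ser_zero t)"
  using phi_tree_nonzero by (auto simp: x_ser_def)

lemma x_ser_phi_P: "x_ser g \<Longrightarrow> ordx_ge g 1 \<Longrightarrow> x_ser (phi_P g ser_zero S)"
  using phi_P_nonzero by (auto simp: x_ser_def)

lemma x_ser_subst:
  assumes "x_ser g" "ordx_ge g 1"
  shows "x_ser (subst F g)"
  unfolding x_ser_def
proof (intro allI impI)
  fix T assume "subst F g T \<noteq> 0"
  then obtain S where "phi_P g ser_zero S T \<noteq> 0"
    unfolding subst_def phi_def by (auto elim: sum.not_neutral_contains_not_neutral)
  then show "wfP T \<and> only_x T" using phi_P_nonzero[OF assms] by blast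
qed

lemma phi_eq_sum:
  assumes "finite A" "\<And>S. F S \<noteq> 0 \<Longrightarrow> phi_P g h S T \<noteq> 0 \<Longrightarrow> S \<in> A"
  shows "phi g h F T = (\<Sum>S\<in>A. F S * phi_P g h S T)"
  unfolding phi_def by (rule sum.mono_neutral_left) (use assms in auto)

lemma subst_eq_sum:
  assumes g: "x_ser g" "ordx_ge g 1" and F: "\<And>S. F S \<noteq> 0 \<Longrightarrow> wfP S"
    and A: "finite A" "\<And>S. wfP S \<Longrightarrow> only_x S \<Longrightarrow> nleavesP S \<le> nleavesP T \<Longrightarrow> S \<in> A"
  shows "subst F g T = (\<Sum>S\<in>A. F S * phi_P g ser_zero S T)"
  unfolding subst_def by (rule phi_eq_sum[OF A(1)]) (use phi_P_nonzero[OF g] F A(2) in blast)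

lemma subst_ser_add:
  assumes g: "x_ser g" "ordx_ge g 1" and "x_ser F" "x_ser G"
  shows "subst (ser_add F G) g = ser_add (subst F g) (subst G g)"
proof
  fix T
  have expand: "subst H g T = (\<Sum>S\<in>x_trees (nleavesP T). H S * phi_P g ser_zero S T)"
    if "x_ser H" for H
    using that by (intro subst_eq_sum[OF g _ finite_x_trees]) (auto simp: x_ser_def x_trees_def)
  have "subst (ser_add F G) g T
      = (\<Sum>S\<in>x_trees (nleavesP T). ser_add F G S * phi_P g ser_zero S T)"
    by (rule expand[OF x_ser_ser_add[OF assms(3,4)]])
  also have "\<dots> = subst F g T + subst G g T"
    by (simp add: expand[OF assms(3)] expand[OF assms(4)] ser_add_def sum.distrib distrib_right)
  finally show "subst (ser_add F G) g T = ser_add (subst F g) (subst G g) T"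
    by (simp add: ser_add_def)
qed

section \<open>The derivations on trees with all leaves labelled x\<close>

fun collapse :: "ptree \<Rightarrow> ptree option" where
  "collapse (Leaf LX) = Some (Leaf LX)"
| "collapse (Leaf LY) = None"
| "collapse (Node ts) = bulletP (map collapse ts)"

fun relabel_x :: "ptree \<Rightarrow> ptree" where
  "relabel_x (Leaf l) = Leaf LX"
| "relabel_x (Node ts) = Node (map relabel_x ts)"

lemma wfP_collapse: "wfP (collapse t)"
proof (induct t)
  case (Leaf l)
  then show ?case by (cases l) auto
qed (auto intro!: wfP_bulletP)

lemma reduced_relabel_x: "reduced t \<Longrightarrow> reduced (relabel_x t)"
  by (induct t) auto

lemma relabel_x_id: "LY \<notin> set (leaves t) \<Longrightarrow> relabel_x t = t"
proof (induct t)
  case (Leaf l)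
  then show ?case by (cases l) auto
qed (auto intro: map_idI)

lemma collapse_id: "reduced t \<Longrightarrow> LY \<notin> set (leaves t) \<Longrightarrow> collapse t = Some t"
proof (induct t)
  case (Leaf l)
  then show ?case by (cases l) auto
next
  case (Node ts)
  then have "map collapse ts = map Some ts" by auto
  then show ?case
    using Node.prems bulletP_map_Some_Node[of ts] by (simp only: collapse.simps) simp
qed

lemma leavesP_collapse: "leavesP (collapse t) = filter ((=) LX) (leaves t)"
proof (induct t)
  case (Leaf l)
  then show ?case by (cases l) auto
next
  case (Node ts)
  then show ?case by (simp add: leavesP_bulletP filter_concat comp_def cong: map_cong)
qed

lemma phi_tree_xser_oneP: "phi_tree (xser :: ('k::field) ser) oneP t = tree_ser (collapse t)"
proof (induct t)
  case (Leaf l)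
  then show ?case by (cases l) (auto simp: xser_eq_tree_ser oneP_eq_tree_ser)
next
  case (Node ts)
  then have "map (phi_tree (xser :: 'k ser) oneP) ts = map tree_ser (map collapse ts)" by auto
  then show ?case
    using ser_prod_tree_ser[of "map collapse ts"] wfP_collapse by (simp only: phi_tree.simps) simp
qed

lemma phi_tree_xser_xser:
  "reduced t \<Longrightarrow> phi_tree (xser :: ('k::field) ser) xser t = tree_ser (Some (relabel_x t))"
proof (induct t)
  case (Leaf l)
  then show ?case by (cases l) (auto simp: xser_eq_tree_ser)
next
  case (Node ts)
  then have "map (phi_tree (xser :: 'k ser) xser) ts = map tree_ser (map Some (map relabel_x ts))"
    by auto
  moreover have "bulletP (map Some (map relabel_x ts)) = Some (Node (map relabel_x ts))"
    using Node.prems by (intro bulletP_map_Some_Node) simp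
  moreover have "ser_prod (map tree_ser (map Some (map relabel_x ts)))
      = tree_ser (bulletP (map Some (map relabel_x ts)))"
    using Node.prems reduced_relabel_x by (intro ser_prod_tree_ser) auto
  ultimately show ?case by (simp only: phi_tree.simps relabel_x.simps)
qed

lemma dlist_eq_concat:
  "dlist ts = concat (map (\<lambda>k. map (\<lambda>z. ts[k := z]) (dtree (ts ! k))) [0..<length ts])"
proof (induct ts)
  case (Cons t ts)
  have "[0..<length (t # ts)] = 0 # map Suc [0..<length ts]"
    by (simp add: upt_conv_Cons map_Suc_upt del: upt_Suc)
  then show ?case using Cons by (simp add: comp_def map_concat)
qed simp

lemma set_dtree_Node:
  "z \<in> set (dtree (Node ts)) \<longleftrightarrow> (\<exists>k<length ts. \<exists>z'\<in>set (dtree (ts ! k)). z = Node (ts[k := z']))"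
  by (auto simp: dlist_eq_concat image_iff)

definition count_x :: "ptree \<Rightarrow> nat" where
  "count_x t = count_list (leaves t) LX"

definition count_y :: "ptree \<Rightarrow> nat" where
  "count_y t = count_list (leaves t) LY"

lemma count_x_Node: "count_x (Node ts) = sum_list (map count_x ts)"
  unfolding count_x_def by (simp add: count_list_concat comp_def)

lemma count_y_Node: "count_y (Node ts) = sum_list (map count_y ts)"
  unfolding count_y_def by (simp add: count_list_concat comp_def)

lemma count_x_eq_length: "LY \<notin> set (leaves t) \<Longrightarrow> count_x t = length (leaves t)"
proof -
  have "LY \<notin> set xs \<Longrightarrow> count_list xs LX = length xs" for xs
  proof (induct xs)
    case (Cons l xs)
    then show ?case by (cases l) auto
  qed simp
  then show "LY \<notin> set (leaves t) \<Longrightarrow> count_x t = length (leaves t)"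
    by (simp add: count_x_def)
qed

lemma sum_list_map_update_nat:
  "k < length ts \<Longrightarrow> sum_list (map f (ts[k := x])) + f (ts ! k) = sum_list (map f ts) + (f x :: nat)"
proof (induct ts arbitrary: k)
  case (Cons t ts)
  then show ?case by (cases k) auto
qed simp

lemma mem_dtree:
  assumes "z \<in> set (dtree t)"
  shows "(reduced t \<longrightarrow> reduced z) \<and> relabel_x z = relabel_x t \<and> count_x z + 1 = count_x t
     \<and> count_y z = count_y t + 1 \<and> length (leaves z) = length (leaves t)"
  using assms
proof (induct t arbitrary: z)
  case (Leaf l)
  then show ?case by (cases l) (auto simp: count_x_def count_y_def)
next
  case (Node ts)
  then obtain k z' where k: "k < length ts" "z' \<in> set (dtree (ts ! k))" "z = Node (ts[k := z'])"
    by (auto simp only: set_dtree_Node)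
  have IH: "(reduced (ts ! k) \<longrightarrow> reduced z') \<and> relabel_x z' = relabel_x (ts ! k)
     \<and> count_x z' + 1 = count_x (ts ! k) \<and> count_y z' = count_y (ts ! k) + 1
     \<and> length (leaves z') = length (leaves (ts ! k))"
    using Node.hyps[of "ts ! k" z'] k by auto
  have "reduced (Node ts) \<longrightarrow> reduced z"
    using IH k set_update_subset_insert[of ts k z'] by auto
  moreover have "relabel_x z = relabel_x (Node ts)"
    using IH k by (simp add: map_update) (metis list_update_id nth_map)
  moreover have "count_x z + 1 = count_x (Node ts)" "count_y z = count_y (Node ts) + 1"
    using sum_list_map_update_nat[OF k(1), of count_x z'] sum_list_map_update_nat[OF k(1), of count_y z']
      IH k by (simp_all add: count_x_Node count_y_Node)
  moreover have "length (leaves z) = length (leaves (Node ts))"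
    using sum_list_map_update_nat[OF k(1), of "\<lambda>s. length (leaves s)" z'] IH k
    by (simp add: length_concat comp_def)
  ultimately show ?case by blast
qed

lemma length_dtree: "length (dtree t) = count_x t"
proof (induct t)
  case (Leaf l)
  then show ?case by (cases l) (auto simp: count_x_def)
next
  case (Node ts)
  have "length (dtree (Node ts)) = (\<Sum>k<length ts. length (dtree (ts ! k)))"
    by (simp add: dlist_eq_concat length_concat comp_def sum_list_sum_nth atLeast0LessThan)
  also have "\<dots> = (\<Sum>k<length ts. count_x (ts ! k))"
    using Node by (auto intro!: sum.cong)
  also have "\<dots> = count_x (Node ts)"
    by (simp add: count_x_Node sum_list_sum_nth atLeast0LessThan)
  finally show ?case .
qed

text \<open>\<open>d/dx S = \<phi>\<^bsub>(x,1)\<^esub>(d S)\<close> is the sum of this list: \<open>S\<close> with one of its leaves deleted.\<close>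

definition leaf_deletions :: "ptree \<Rightarrow> ptree option list" where
  "leaf_deletions t = map collapse (dtree t)"

fun leaf_deletionsP :: "ptree option \<Rightarrow> ptree option list" where
  "leaf_deletionsP None = []"
| "leaf_deletionsP (Some t) = leaf_deletions t"

lemma leaf_deletions_Node:
  assumes "\<forall>t\<in>set ts. reduced t \<and> LY \<notin> set (leaves t)"
  shows "leaf_deletions (Node ts)
    = concat (map (\<lambda>k. map (\<lambda>S. bulletP ((map Some ts)[k := S])) (leaf_deletions (ts ! k))) [0..<length ts])"
proof -
  have "map collapse ts = map Some ts" using assms collapse_id by auto
  then have "collapse (Node (ts[k := z])) = bulletP ((map Some ts)[k := collapse z])" for k z
    by (simp only: collapse.simps map_update)
  then show ?thesis by (simp add: leaf_deletions_def dlist_eq_concat map_concat comp_def)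
qed

lemma mem_leaf_deletions:
  assumes "reduced t" "LY \<notin> set (leaves t)" "S \<in> set (leaf_deletions t)"
  shows "wfP S \<and> only_x S \<and> nleavesP S + 1 = length (leaves t)"
proof -
  from assms obtain z where z: "z \<in> set (dtree t)" "S = collapse z"
    by (auto simp: leaf_deletions_def)
  have "nleavesP S = count_x z"
    using z by (simp add: nleavesP_def leavesP_collapse count_x_def count_list_eq_length_filter)
  moreover have "count_x z + 1 = length (leaves t)"
    using mem_dtree[OF z(1)] count_x_eq_length[OF assms(2)] by simp
  ultimately show ?thesis
    using wfP_collapse z by (simp add: only_x_iff_leavesP leavesP_collapse)
qed

lemma leaf_deletionsP_subset_x_trees:
  "S \<in> x_trees N \<Longrightarrow> set (leaf_deletionsP S) \<subseteq> x_trees N"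
  by (cases S) (auto simp: x_trees_def nleavesP_def dest: mem_leaf_deletions)

lemma count_leaf_deletionsP_eq_0:
  assumes "wfP S" "only_x S" "nleavesP S \<noteq> nleavesP T + 1"
  shows "count_list (leaf_deletionsP S) T = 0"
  using assms mem_leaf_deletions[of _ T]
  by (cases S) (auto simp: count_list_0_iff nleavesP_def)

lemma sum_list_eq_sum_count_list:
  fixes h :: "'a \<Rightarrow> 'k::field"
  assumes "finite B" "set xs \<subseteq> B"
  shows "sum_list (map h xs) = (\<Sum>V\<in>B. of_nat (count_list xs V) * h V)"
  using assms(2)
proof (induct xs)
  case (Cons x xs)
  have "(\<Sum>V\<in>B. of_nat (count_list (x # xs) V) * h V)
      = (\<Sum>V\<in>B. (if x = V then h V else 0) + of_nat (count_list xs V) * h V)"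
    by (rule sum.cong) (auto simp: algebra_simps)
  also have "\<dots> = h x + (\<Sum>V\<in>B. of_nat (count_list xs V) * h V)"
    using Cons.prems assms(1) by (simp add: sum.distrib)
  finally show ?case using Cons by simp
qed simp

lemma sum_list_tree_ser: "sum_list (map (\<lambda>S. tree_ser S T) Ss) = (of_nat (count_list Ss T) :: 'k::field)"
  by (induct Ss) (auto simp: tree_ser_def)

lemma dP_simps [simp]: "dP None = []" "dP (Some t) = map Some (dtree t)"
  by (simp_all add: dP_def)

lemma dser_eq_sum:
  assumes "finite A" "\<And>S. F S \<noteq> 0 \<Longrightarrow> T \<in> set (dP S) \<Longrightarrow> S \<in> A"
  shows "dser F T = (\<Sum>S\<in>A. F S * of_nat (count_list (dP S) T))"
  unfolding dser_def
  by (rule sum.mono_neutral_left) (use assms in \<open>auto, metis count_list_0_iff of_nat_0\<close>)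

lemma hder_eq_sum:
  fixes F :: "('k::field) ser"
  assumes A: "finite A"
    and supp: "\<And>S W. F S \<noteq> 0 \<Longrightarrow> W \<in> set (dP S) \<Longrightarrow> phi_P xser h W T \<noteq> 0 \<Longrightarrow> S \<in> A"
  shows "hder h F T = (\<Sum>S\<in>A. F S * sum_list (map (\<lambda>W. phi_P xser h W T) (dP S)))"
proof -
  define B where "B = (\<Union>S\<in>A. set (dP S))"
  have B: "finite B" using A by (simp add: B_def)
  have "hder h F T = (\<Sum>V\<in>B. dser F V * phi_P xser h V T)"
    unfolding hder_def
  proof (rule phi_eq_sum[OF B])
    fix V assume "dser F V \<noteq> 0" "phi_P xser h V T \<noteq> 0"
    moreover from \<open>dser F V \<noteq> 0\<close> obtain S where "F S \<noteq> 0" "V \<in> set (dP S)"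
      unfolding dser_def by (auto elim: sum.not_neutral_contains_not_neutral)
    ultimately show "V \<in> B" using supp unfolding B_def by blast
  qed
  also have "\<dots> = (\<Sum>V\<in>B. (\<Sum>S\<in>A. F S * of_nat (count_list (dP S) V)) * phi_P xser h V T)"
  proof (rule sum.cong[OF refl])
    fix V
    show "dser F V * phi_P xser h V T
        = (\<Sum>S\<in>A. F S * of_nat (count_list (dP S) V)) * phi_P xser h V T"
      by (cases "phi_P xser h V T = 0") (use supp in \<open>simp_all add: dser_eq_sum[OF A]\<close>)
  qed
  also have "\<dots> = (\<Sum>S\<in>A. F S * (\<Sum>V\<in>B. of_nat (count_list (dP S) V) * phi_P xser h V T))"
    by (simp add: sum_distrib_left sum_distrib_right mult.assoc sum.swap[of _ B])
  also have "\<dots> = (\<Sum>S\<in>A. F S * sum_list (map (\<lambda>W. phi_P xser h W T) (dP S)))"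
  proof (rule sum.cong[OF refl])
    fix S assume "S \<in> A"
    then have "set (dP S) \<subseteq> B" by (auto simp: B_def)
    then show "F S * (\<Sum>V\<in>B. of_nat (count_list (dP S) V) * phi_P xser h V T)
        = F S * sum_list (map (\<lambda>W. phi_P xser h W T) (dP S))"
      by (simp add: sum_list_eq_sum_count_list[OF B])
  qed
  finally show ?thesis .
qed

lemma mem_dtree_x_tree:
  "reduced s \<Longrightarrow> LY \<notin> set (leaves s) \<Longrightarrow> z \<in> set (dtree s) \<Longrightarrow> reduced z \<and> relabel_x z = s"
  using mem_dtree[of z s] relabel_x_id[of s] by simp

lemma hder_oneP_support:
  assumes "x_ser F" "F S \<noteq> 0" "W \<in> set (dP S)" "phi_P xser oneP W T \<noteq> 0"
  shows "wfP S \<and> only_x S \<and> nleavesP S = nleavesP T + 1"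
proof -
  obtain s z where sz: "S = Some s" "W = Some z" "z \<in> set (dtree s)"
    using assms(3) by (cases S) auto
  have "T \<in> set (leaf_deletions s)"
    using assms(4) sz by (auto simp: phi_P_def phi_tree_xser_oneP tree_ser_def leaf_deletions_def
        split: if_splits)
  then show ?thesis
    using assms(1,2) mem_leaf_deletions sz by (force simp: x_ser_def nleavesP_def)
qed

lemma hder_xser_support:
  assumes "x_ser F" "F S \<noteq> 0" "W \<in> set (dP S)" "phi_P xser xser W T \<noteq> 0"
  shows "S = T"
proof -
  obtain s z where sz: "S = Some s" "W = Some z" "z \<in> set (dtree s)"
    using assms(3) by (cases S) auto
  then have "reduced z \<and> relabel_x z = s"
    using assms(1,2) mem_dtree_x_tree by (auto simp: x_ser_def)
  then show ?thesis
    using assms(4) sz by (auto simp: phi_P_def phi_tree_xser_xser tree_ser_def split: if_splits)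
qed

lemma ddx_eq_sum:
  fixes F :: "('k::field) ser"
  assumes F: "x_ser F" and A: "finite A"
    and supp: "\<And>S. wfP S \<Longrightarrow> only_x S \<Longrightarrow> nleavesP S = nleavesP T + 1 \<Longrightarrow> S \<in> A"
  shows "ddx F T = (\<Sum>S\<in>A. F S * of_nat (count_list (leaf_deletionsP S) T))"
proof -
  have "ddx F T = (\<Sum>S\<in>A. F S * sum_list (map (\<lambda>W. phi_P xser oneP W T) (dP S)))"
    unfolding ddx_def by (rule hder_eq_sum[OF A]) (use hder_oneP_support[OF F] supp in blast)
  also have "\<dots> = (\<Sum>S\<in>A. F S * of_nat (count_list (leaf_deletionsP S) T))"
  proof (rule sum.cong[OF refl])
    fix S
    have "sum_list (map (\<lambda>W. phi_P (xser :: 'k ser) oneP W T) (dP S))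
        = of_nat (count_list (leaf_deletionsP S) T)"
      using sum_list_tree_ser[of T "leaf_deletionsP S", where 'k = 'k]
      by (cases S) (simp_all add: leaf_deletions_def phi_P_def phi_tree_xser_oneP comp_def)
    then show "F S * sum_list (map (\<lambda>W. phi_P xser oneP W T) (dP S))
        = F S * of_nat (count_list (leaf_deletionsP S) T)" by simp
  qed
  finally show ?thesis .
qed

lemma ddx_eq_sum_x_trees:
  "x_ser F \<Longrightarrow> ddx F T = (\<Sum>S\<in>x_trees (nleavesP T + 1). F S * of_nat (count_list (leaf_deletionsP S) T))"
  by (rule ddx_eq_sum[OF _ finite_x_trees]) (auto simp: x_trees_def)

lemma hder_xser:
  fixes F :: "('k::field) ser"
  assumes F: "x_ser F"
  shows "hder xser F T = of_nat (nleavesP T) * F T"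
proof -
  have "hder xser F T = (\<Sum>S\<in>{T}. F S * sum_list (map (\<lambda>W. phi_P xser xser W T) (dP S)))"
    by (rule hder_eq_sum) (use hder_xser_support[OF F] in auto)
  also have "\<dots> = of_nat (nleavesP T) * F T"
  proof (cases "F T = 0")
    case False
    show ?thesis
    proof (cases T)
      case (Some t)
      then have t: "reduced t" "LY \<notin> set (leaves t)"
        using F False by (auto simp: x_ser_def)
      then have "\<forall>z\<in>set (dtree t). phi_P (xser :: 'k ser) xser (Some z) T = 1"
        using Some mem_dtree_x_tree by (auto simp: phi_P_def phi_tree_xser_xser tree_ser_def)
      then have "sum_list (map (\<lambda>W. phi_P (xser :: 'k ser) xser W T) (dP T)) = of_nat (length (dtree t))"
        using Some by (simp add: comp_def sum_list_triv cong: map_cong)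
      then show ?thesis
        using t Some by (simp add: length_dtree count_x_eq_length nleavesP_def)
    qed (simp add: nleavesP_def)
  qed simp
  finally show ?thesis .
qed

lemma x_ser_ddx:
  assumes F: "x_ser F"
  shows "x_ser (ddx F)"
  unfolding x_ser_def
proof (intro allI impI)
  fix T assume "ddx F T \<noteq> 0"
  then obtain S where "F S * of_nat (count_list (leaf_deletionsP S) T) \<noteq> 0"
    unfolding ddx_eq_sum_x_trees[OF F] by (rule sum.not_neutral_contains_not_neutral)
  then have S: "F S \<noteq> 0" "count_list (leaf_deletionsP S) T \<noteq> 0"
    by (metis mult_not_zero of_nat_0)+
  then obtain s where "S = Some s" "T \<in> set (leaf_deletions s)"
    by (cases S) (auto simp: count_list_0_iff)
  then show "wfP T \<and> only_x T"
    using S F mem_leaf_deletions by (auto simp: x_ser_def)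
qed

lemma x_ser_hder_xser: "x_ser F \<Longrightarrow> x_ser (hder xser F)"
  by (auto simp: x_ser_def hder_xser)

lemma ddx_oneP: "ddx oneP = ser_zero"
proof
  fix T
  have "x_ser oneP" by (simp add: x_ser_def oneP_def)
  then show "ddx oneP T = ser_zero T"
    unfolding ddx_eq_sum_x_trees[OF \<open>x_ser oneP\<close>] ser_zero_def
    by (intro sum.neutral) (simp add: oneP_def)
qed

lemma ser_prod_update_add:
  "j < length fs \<Longrightarrow>
    ser_prod (fs[j := (\<lambda>T. F T + G T)]) T' = ser_prod (fs[j := F]) T' + ser_prod (fs[j := G]) T'"
  unfolding ser_prod_eq_sum_factorizations by (simp add: coeff_prod_update sum.distrib algebra_simps)

lemma ser_prod_update_scale:
  "j < length fs \<Longrightarrow> ser_prod (fs[j := (\<lambda>T. c * F T)]) T' = c * ser_prod (fs[j := F]) T'"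
  unfolding ser_prod_eq_sum_factorizations by (simp add: coeff_prod_update sum_distrib_left algebra_simps)

lemma ser_prod_update_sum_list:
  assumes "j < length fs"
  shows "ser_prod (fs[j := (\<lambda>T. sum_list (map (\<lambda>S. H S T) Ss))]) T'
       = sum_list (map (\<lambda>S. ser_prod (fs[j := H S]) T') Ss)"
proof (induct Ss)
  case Nil
  then show ?case
    using assms unfolding ser_prod_eq_sum_factorizations by (simp add: coeff_prod_update)
next
  case (Cons S Ss)
  then show ?case
    using ser_prod_update_add[OF assms, of "H S" "\<lambda>T. sum_list (map (\<lambda>S. H S T) Ss)"] by simp
qed

lemma ser_prod_update_linear:
  assumes "j < length fs"
  shows "ser_prod (fs[j := (\<lambda>T. sum_list (map (\<lambda>S. H S T) Ss) + c * (fs ! j) T)]) T'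
       = sum_list (map (\<lambda>S. ser_prod (fs[j := H S]) T') Ss) + c * ser_prod fs T'"
  using assms
  by (simp add: ser_prod_update_add ser_prod_update_scale ser_prod_update_sum_list)

lemma ser_prod_update_phi_tree:
  assumes wf: "wf_ser g" "wf_ser h" and j: "j < length ts"
  shows "ser_prod ((map (phi_tree g h) ts)[j := (\<lambda>T. sum_list (map (\<lambda>S. phi_P g h S T) Ss)
           + c * phi_tree g h (ts ! j) T)]) T
       = sum_list (map (\<lambda>S. phi_P g h (bulletP ((map Some ts)[j := S])) T) Ss)
           + c * phi_tree g h (Node ts) T"
proof -
  let ?fs = "map (phi_tree g h) ts"
  have "ser_prod (?fs[j := (\<lambda>T. sum_list (map (\<lambda>S. phi_P g h S T) Ss) + c * (?fs ! j) T)]) T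
      = sum_list (map (\<lambda>S. ser_prod (?fs[j := phi_P g h S]) T) Ss) + c * ser_prod ?fs T"
    using j by (intro ser_prod_update_linear) simp
  moreover have "ser_prod (?fs[j := phi_P g h S]) = phi_P g h (bulletP ((map Some ts)[j := S]))" for S
  proof -
    have "?fs[j := phi_P g h S] = map (phi_P g h) ((map Some ts)[j := S])"
      by (simp add: map_update phi_P_def comp_def)
    then show ?thesis by (simp only: phi_P_bulletP[OF wf])
  qed
  ultimately show ?thesis using j by simp
qed

lemma phi_tree_y_free: "LY \<notin> set (leaves t) \<Longrightarrow> phi_tree g h t = phi_tree g h' t"
proof (induct t)
  case (Leaf l)
  then show ?case by (cases l) auto
next
  case (Node ts)
  then have "map (phi_tree g h) ts = map (phi_tree g h') ts" by auto
  then show ?case by (metis phi_tree.simps(3))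
qed

lemma sum_lessThan_eq_1_nat:
  fixes f :: "nat \<Rightarrow> nat"
  assumes "(\<Sum>i<n. f i) = 1"
  obtains j where "j < n" "f j = 1" "\<And>i. i < n \<Longrightarrow> i \<noteq> j \<Longrightarrow> f i = 0"
proof -
  obtain j where j: "j < n" "f j \<noteq> 0"
    using assms by (metis lessThan_iff sum.neutral zero_neq_one)
  have split: "(\<Sum>i<n. f i) = f j + (\<Sum>i\<in>{..<n} - {j}. f i)"
    using j by (simp add: sum.remove)
  have "f i = 0" if "i < n" "i \<noteq> j" for i
  proof -
    have "f i \<le> (\<Sum>i\<in>{..<n} - {j}. f i)"
      by (rule member_le_sum) (use that in auto)
    then show ?thesis using split assms j(2) by linarith
  qed
  moreover have "f j = 1" using split assms j by linarith
  ultimately show ?thesis using that j(1) by blast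
qed

lemma phi_tree_ser_add:
  "count_y t = 1 \<Longrightarrow> phi_tree g (ser_add h h') t T = phi_tree g h t T + phi_tree g h' t T"
proof (induct t arbitrary: T)
  case (Leaf l)
  then show ?case by (cases l) (auto simp: count_y_def ser_add_def)
next
  case (Node ts)
  have "(\<Sum>i<length ts. count_y (ts ! i)) = 1"
    using Node.prems by (simp add: count_y_Node sum_list_sum_nth atLeast0LessThan)
  then obtain j where j: "j < length ts" "count_y (ts ! j) = 1"
    and y_free: "\<And>i. i < length ts \<Longrightarrow> i \<noteq> j \<Longrightarrow> LY \<notin> set (leaves (ts ! i))"
    by (rule sum_lessThan_eq_1_nat) (auto simp: count_y_def count_list_0_iff)
  have only_j: "map (phi_tree g H) ts = (map (phi_tree g h) ts)[j := phi_tree g H (ts ! j)]" for H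
  proof (rule nth_equalityI)
    fix i assume "i < length (map (phi_tree g H) ts)"
    then show "map (phi_tree g H) ts ! i = (map (phi_tree g h) ts)[j := phi_tree g H (ts ! j)] ! i"
      using phi_tree_y_free[OF y_free, of i g H h] by (cases "i = j") auto
  qed simp
  let ?fs = "map (phi_tree g h) ts"
  have "phi_tree g (ser_add h h') (Node ts) T = ser_prod (?fs[j := phi_tree g (ser_add h h') (ts ! j)]) T"
    by (simp only: phi_tree.simps only_j[of "ser_add h h'"])
  also have "phi_tree g (ser_add h h') (ts ! j) = (\<lambda>T. phi_tree g h (ts ! j) T + phi_tree g h' (ts ! j) T)"
    using Node.hyps[of "ts ! j"] j by auto
  also have "ser_prod (?fs[j := \<dots>]) T
      = ser_prod (?fs[j := phi_tree g h (ts ! j)]) T + ser_prod (?fs[j := phi_tree g h' (ts ! j)]) T"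
    using j by (simp add: ser_prod_update_add)
  also have "\<dots> = phi_tree g h (Node ts) T + phi_tree g h' (Node ts) T"
    by (simp only: phi_tree.simps only_j[of h, symmetric] only_j[of h', symmetric])
  finally show ?case .
qed

lemma phi_P_dP_ser_add:
  assumes "x_ser F" "F S \<noteq> 0" "W \<in> set (dP S)"
  shows "phi_P g (ser_add h h') W T = phi_P g h W T + phi_P g h' W T"
proof -
  obtain s z where sz: "S = Some s" "W = Some z" "z \<in> set (dtree s)"
    using assms(3) by (cases S) auto
  then have "count_y z = 1"
    using assms(1,2) mem_dtree[OF sz(3)] by (auto simp: x_ser_def count_y_def count_list_0_iff)
  then show ?thesis
    using sz by (simp add: phi_P_def phi_tree_ser_add)
qed

lemma sum_list_dP_ser_add:
  assumes "x_ser F" "F S \<noteq> 0"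
  shows "sum_list (map (\<lambda>W. phi_P g (ser_add h h') W T) (dP S))
       = sum_list (map (\<lambda>W. phi_P g h W T) (dP S)) + sum_list (map (\<lambda>W. phi_P g h' W T) (dP S))"
proof -
  have "map (\<lambda>W. phi_P g (ser_add h h') W T) (dP S) = map (\<lambda>W. phi_P g h W T + phi_P g h' W T) (dP S)"
    by (rule map_cong[OF refl phi_P_dP_ser_add[OF assms]])
  then show ?thesis by (simp only: sum_list_addf)
qed

lemma hder_oneP_xser_support:
  fixes F :: "('k::field) ser"
  assumes F: "x_ser F" and S: "F S \<noteq> 0" "W \<in> set (dP S)"
    and "phi_P (xser :: 'k ser) oneP W T \<noteq> 0 \<or> phi_P (xser :: 'k ser) xser W T \<noteq> 0"
  shows "S \<in> x_trees (nleavesP T + 1)"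
  using assms(4)
proof
  assume "phi_P xser oneP W T \<noteq> 0"
  from hder_oneP_support[OF F S this] show ?thesis by (simp add: x_trees_def)
next
  assume "phi_P xser xser W T \<noteq> 0"
  then have "S = T" by (rule hder_xser_support[OF F S])
  then show ?thesis using F S(1) by (auto simp: x_trees_def x_ser_def)
qed

lemma hder_oneP_plus_xser:
  fixes F :: "('k::field) ser"
  assumes F: "x_ser F"
  shows "hder (ser_add oneP xser) F = ser_add (ddx F) (hder xser F)"
proof
  fix T
  let ?A = "x_trees (nleavesP T + 1)"
  let ?d = "\<lambda>h S. sum_list (map (\<lambda>W. phi_P (xser :: 'k ser) h W T) (dP S))"
  note supp = hder_oneP_xser_support[OF F]
  have "hder (ser_add oneP xser) F T = (\<Sum>S\<in>?A. F S * ?d (ser_add oneP xser) S)"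
  proof (rule hder_eq_sum[OF finite_x_trees])
    fix S W
    assume S: "F S \<noteq> 0" "W \<in> set (dP S)" and "phi_P (xser :: 'k ser) (ser_add oneP xser) W T \<noteq> 0"
    then have "phi_P xser oneP W T + phi_P (xser :: 'k ser) xser W T \<noteq> 0"
      by (simp add: phi_P_dP_ser_add[OF F S])
    then have "phi_P (xser :: 'k ser) oneP W T \<noteq> 0 \<or> phi_P (xser :: 'k ser) xser W T \<noteq> 0"
      by auto
    then show "S \<in> ?A" by (rule supp[OF S])
  qed
  also have "\<dots> = (\<Sum>S\<in>?A. F S * ?d oneP S) + (\<Sum>S\<in>?A. F S * ?d xser S)"
    unfolding sum.distrib[symmetric]
    by (rule sum.cong[OF refl]) (metis sum_list_dP_ser_add[OF F] distrib_left mult_zero_left)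
  also have "\<dots> = ddx F T + hder xser F T"
  proof -
    have "ddx F T = (\<Sum>S\<in>?A. F S * ?d oneP S)"
      unfolding ddx_def by (rule hder_eq_sum[OF finite_x_trees]) (use supp in blast)
    moreover have "hder xser F T = (\<Sum>S\<in>?A. F S * ?d xser S)"
      by (rule hder_eq_sum[OF finite_x_trees]) (use supp in blast)
    ultimately show ?thesis by simp
  qed
  finally show "hder (ser_add oneP xser) F T = ser_add (ddx F) (hder xser F) T"
    by (simp add: ser_add_def)
qed

section \<open>The Leibniz rule\<close>

lemma upt_0_Suc: "[0..<Suc n] = 0 # map Suc [0..<n]"
  by (simp add: upt_conv_Cons map_Suc_upt del: upt_Suc)

text \<open>Empty factors have no leaves to delete, so only the non-empty factors matter.\<close>

lemma concat_leaf_deletionsP_trees_of: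
  assumes "\<And>Os Os'. trees_of Os = trees_of Os' \<Longrightarrow> H Os = H Os'"
  shows "concat (map (\<lambda>j. map (\<lambda>S. H (Us[j := S])) (leaf_deletionsP (Us ! j))) [0..<length Us])
    = concat (map (\<lambda>k. map (\<lambda>S. H ((map Some (trees_of Us))[k := S])) (leaf_deletions (trees_of Us ! k)))
        [0..<length (trees_of Us)])"
  using assms
proof (induct Us arbitrary: H)
  case (Cons U Us)
  let ?H = "\<lambda>Os. H (U # Os)"
  have IH: "concat (map (\<lambda>j. map (\<lambda>S. ?H (Us[j := S])) (leaf_deletionsP (Us ! j))) [0..<length Us])
    = concat (map (\<lambda>k. map (\<lambda>S. ?H ((map Some (trees_of Us))[k := S])) (leaf_deletions (trees_of Us ! k)))
        [0..<length (trees_of Us)])"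
    by (rule Cons.hyps, rule Cons.prems) (cases U; simp)
  have split_head: "concat (map (\<lambda>j. map (\<lambda>S. H ((U # Us)[j := S])) (leaf_deletionsP ((U # Us) ! j)))
        [0..<length (U # Us)])
      = map (\<lambda>S. H (S # Us)) (leaf_deletionsP U)
        @ concat (map (\<lambda>j. map (\<lambda>S. ?H (Us[j := S])) (leaf_deletionsP (Us ! j))) [0..<length Us])"
    by (simp add: upt_0_Suc comp_def del: upt_Suc)
  show ?case
  proof (cases U)
    case None
    have "?H Os = H Os" for Os by (rule Cons.prems) (simp add: None)
    then show ?thesis using None split_head IH by simp
  next
    case (Some t)
    have "H (S # Us) = H (S # map Some (trees_of Us))" for S
      by (rule Cons.prems) (cases S; simp)
    then show ?thesis using Some split_head IH by (simp add: upt_0_Suc comp_def del: upt_Suc)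
  qed
qed simp

lemma leaf_deletionsP_bulletP:
  assumes "\<forall>S\<in>set Us. wfP S \<and> only_x S"
  shows "leaf_deletionsP (bulletP Us)
    = concat (map (\<lambda>j. map (\<lambda>S. bulletP (Us[j := S])) (leaf_deletionsP (Us ! j))) [0..<length Us])"
proof -
  let ?ts = "trees_of Us"
  have ts: "\<forall>t\<in>set ?ts. reduced t \<and> LY \<notin> set (leaves t)"
  proof
    fix t assume "t \<in> set ?ts"
    then have "Some t \<in> set Us" by (simp add: set_trees_of)
    then show "reduced t \<and> LY \<notin> set (leaves t)" using assms by fastforce
  qed
  have "leaf_deletionsP (graft ?ts)
    = concat (map (\<lambda>k. map (\<lambda>S. bulletP ((map Some ?ts)[k := S])) (leaf_deletions (?ts ! k))) [0..<length ?ts])"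
  proof (cases ?ts rule: remdups_adj.cases)
    case (3 t1 t2 rest)
    then show ?thesis using leaf_deletions_Node[OF ts] by (simp add: graft_def)
  qed (simp_all add: graft_def)
  moreover have "bulletP Os = bulletP Os'" if "trees_of Os = trees_of Os'" for Os Os'
    using that by (simp add: bulletP_eq_graft)
  ultimately show ?thesis
    using concat_leaf_deletionsP_trees_of[of bulletP Us] by (simp add: bulletP_eq_graft)
qed

definition x_tree_lists :: "nat \<Rightarrow> nat \<Rightarrow> ptree option list set" where
  "x_tree_lists N m = {Us. set Us \<subseteq> x_trees N \<and> length Us = m}"

lemma finite_x_tree_lists: "finite (x_tree_lists N m)"
  unfolding x_tree_lists_def by (rule finite_lists_length_eq[OF finite_x_trees])

lemma ser_prod_eq_sum_x_tree_lists:
  fixes fs :: "('k::field) ser list"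
  assumes fs: "\<forall>f\<in>set fs. x_ser f" and U: "nleavesP U \<le> N"
  shows "ser_prod fs U = (\<Sum>Us\<in>x_tree_lists N (length fs). coeff_prod fs Us * tree_ser (bulletP Us) U)"
proof -
  let ?D = "factorizations (length fs) U" and ?L = "x_tree_lists N (length fs)"
  have "ser_prod fs U = (\<Sum>Us\<in>?D. coeff_prod fs Us)"
    by (rule ser_prod_eq_sum_factorizations)
  also have "\<dots> = (\<Sum>Us\<in>?D \<inter> ?L. coeff_prod fs Us)"
  proof (rule sum.mono_neutral_right[OF finite_factorizations])
    show "\<forall>Us\<in>?D - ?D \<inter> ?L. coeff_prod fs Us = 0"
    proof (intro ballI, rule ccontr)
      fix Us assume Us: "Us \<in> ?D - ?D \<inter> ?L" and nz: "coeff_prod fs Us \<noteq> 0"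
      have D: "length Us = length fs" "\<forall>S\<in>set Us. wfP S" "bulletP Us = U"
        using Us by (auto simp: factorizations_iff)
      have "S \<in> x_trees N" if "S \<in> set Us" for S
      proof -
        obtain i where i: "i < length Us" "S = Us ! i" using \<open>S \<in> set Us\<close> by (metis in_set_conv_nth)
        then have "only_x S"
          using fs coeff_prod_nonzero[OF nz, of i] D by (auto simp: x_ser_def)
        moreover have "nleavesP S \<le> N"
          using nleavesP_le_bulletP[OF i(1)] i D U by simp
        ultimately show ?thesis using D that by (auto simp: x_trees_def)
      qed
      then show False using Us D by (auto simp: x_tree_lists_def)
    qed
  qed auto
  also have "?D \<inter> ?L = {Us\<in>?L. bulletP Us = U}"
    by (auto simp: factorizations_iff x_tree_lists_def x_trees_def)
  also have "(\<Sum>Us\<in>{Us\<in>?L. bulletP Us = U}. coeff_prod fs Us)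
      = (\<Sum>Us\<in>?L. coeff_prod fs Us * tree_ser (bulletP Us) U)"
    by (simp add: sum.inter_filter[OF finite_x_tree_lists] tree_ser_def) (rule sum.cong, auto)
  finally show ?thesis .
qed

lemma sum_x_tree_lists_swap_update:
  fixes F :: "ptree option list \<Rightarrow> ptree option \<Rightarrow> 'k::comm_monoid_add"
  assumes j: "j < m"
  shows "(\<Sum>Ts\<in>x_tree_lists N m. \<Sum>V\<in>x_trees N. F Ts V)
       = (\<Sum>Us\<in>x_tree_lists N m. \<Sum>W\<in>x_trees N. F (Us[j := W]) (Us ! j))"
proof -
  let ?L = "x_tree_lists N m" and ?C = "x_trees N"
  let ?swap = "\<lambda>(Us, W). (Us[j := W], Us ! j)"
  have swap: "?swap (?swap p) = p \<and> ?swap p \<in> ?L \<times> ?C" if p_mem: "p \<in> ?L \<times> ?C" for p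
  proof -
    obtain Us W where p: "p = (Us, W)" "set Us \<subseteq> ?C" "length Us = m" "W \<in> ?C"
      using p_mem by (cases p) (auto simp: x_tree_lists_def)
    then have "set (Us[j := W]) \<subseteq> ?C" "Us ! j \<in> ?C"
      using set_update_subset_insert[of Us j W] j nth_mem[of j Us] by auto
    then show ?thesis using p j by (simp add: x_tree_lists_def)
  qed
  have "(\<Sum>Ts\<in>?L. \<Sum>V\<in>?C. F Ts V) = (\<Sum>p\<in>?L \<times> ?C. F (fst p) (snd p))"
    by (simp add: sum.cartesian_product case_prod_beta)
  also have "\<dots> = (\<Sum>p\<in>?L \<times> ?C. F (fst (?swap p)) (snd (?swap p)))"
    by (rule sum.reindex_bij_witness[where i = ?swap and j = ?swap]) (use swap in auto)
  also have "\<dots> = (\<Sum>Us\<in>?L. \<Sum>W\<in>?C. F (Us[j := W]) (Us ! j))"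
    by (simp add: sum.cartesian_product case_prod_beta)
  finally show ?thesis .
qed

lemma ddx_ser_prod_eq_sum:
  fixes fs :: "('k::field) ser list" and T :: "ptree option"
  assumes fs: "\<forall>f\<in>set fs. x_ser f"
  defines "N \<equiv> nleavesP T + 1"
  shows "ddx (ser_prod fs) T = (\<Sum>Us\<in>x_tree_lists N (length fs).
           coeff_prod fs Us * of_nat (count_list (leaf_deletionsP (bulletP Us)) T))"
proof -
  let ?C = "x_trees N" and ?L = "x_tree_lists N (length fs)"
  let ?c = "\<lambda>U. (of_nat (count_list (leaf_deletionsP U) T) :: 'k)"
  have "ddx (ser_prod fs) T = (\<Sum>U\<in>?C. ser_prod fs U * ?c U)"
    unfolding N_def by (rule ddx_eq_sum_x_trees[OF x_ser_ser_prod[OF fs]])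
  also have "\<dots> = (\<Sum>U\<in>?C. (\<Sum>Us\<in>?L. coeff_prod fs Us * tree_ser (bulletP Us) U) * ?c U)"
    by (rule sum.cong[OF refl]) (simp add: ser_prod_eq_sum_x_tree_lists[OF fs] x_trees_def)
  also have "\<dots> = (\<Sum>Us\<in>?L. coeff_prod fs Us * (\<Sum>U\<in>?C. tree_ser (bulletP Us) U * ?c U))"
    by (simp add: sum_distrib_left sum_distrib_right mult.assoc sum.swap[of _ ?C])
  also have "\<dots> = (\<Sum>Us\<in>?L. coeff_prod fs Us * ?c (bulletP Us))"
  proof (rule sum.cong[OF refl])
    fix Us assume "Us \<in> ?L"
    then have "wfP (bulletP Us)" "only_x (bulletP Us)"
      using wfP_only_x_bulletP[of Us] by (auto simp: x_tree_lists_def x_trees_def)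
    then have outside: "?c (bulletP Us) = 0" if "bulletP Us \<notin> ?C"
      using that count_leaf_deletionsP_eq_0 by (auto simp: x_trees_def N_def)
    have "(\<Sum>U\<in>?C. tree_ser (bulletP Us) U * ?c U) = (\<Sum>U\<in>?C. if U = bulletP Us then ?c U else 0)"
      by (rule sum.cong) (auto simp: tree_ser_def)
    also have "\<dots> = ?c (bulletP Us)"
      using outside by (simp add: sum.delta[OF finite_x_trees])
    finally show "coeff_prod fs Us * (\<Sum>U\<in>?C. tree_ser (bulletP Us) U * ?c U)
        = coeff_prod fs Us * ?c (bulletP Us)" by simp
  qed
  finally show ?thesis .
qed

lemma of_nat_count_list_map:
  assumes "finite C" "set xs \<subseteq> C"
  shows "(of_nat (count_list (map h xs) T) :: 'k::field)
       = (\<Sum>W\<in>C. of_nat (count_list xs W) * tree_ser (h W) T)"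
proof -
  have "(of_nat (count_list (map h xs) T) :: 'k) = sum_list (map (\<lambda>W. tree_ser (h W) T) xs)"
    by (simp add: sum_list_tree_ser[symmetric] comp_def)
  also have "\<dots> = (\<Sum>W\<in>C. of_nat (count_list xs W) * tree_ser (h W) T)"
    by (rule sum_list_eq_sum_count_list[OF assms])
  finally show ?thesis .
qed

lemma count_leaf_deletionsP_bulletP:
  assumes "Us \<in> x_tree_lists N m"
  shows "(of_nat (count_list (leaf_deletionsP (bulletP Us)) T) :: 'k::field)
       = (\<Sum>j<m. \<Sum>W\<in>x_trees N. of_nat (count_list (leaf_deletionsP (Us ! j)) W)
            * tree_ser (bulletP (Us[j := W])) T)"
proof -
  have Us: "\<forall>S\<in>set Us. S \<in> x_trees N" "length Us = m"
    using assms by (auto simp: x_tree_lists_def)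
  then have "(of_nat (count_list (leaf_deletionsP (bulletP Us)) T) :: 'k)
      = (\<Sum>j<m. of_nat (count_list (map (\<lambda>S. bulletP (Us[j := S])) (leaf_deletionsP (Us ! j))) T))"
    by (simp add: leaf_deletionsP_bulletP x_trees_def count_list_concat comp_def
        sum_list_sum_nth atLeast0LessThan)
  also have "\<dots> = (\<Sum>j<m. \<Sum>W\<in>x_trees N. of_nat (count_list (leaf_deletionsP (Us ! j)) W)
            * tree_ser (bulletP (Us[j := W])) T)"
  proof (rule sum.cong[OF refl])
    fix j assume "j \<in> {..<m}"
    then have "set (leaf_deletionsP (Us ! j)) \<subseteq> x_trees N"
      using Us by (intro leaf_deletionsP_subset_x_trees) simp
    then show "(of_nat (count_list (map (\<lambda>S. bulletP (Us[j := S])) (leaf_deletionsP (Us ! j))) T) :: 'k)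
        = (\<Sum>W\<in>x_trees N. of_nat (count_list (leaf_deletionsP (Us ! j)) W)
            * tree_ser (bulletP (Us[j := W])) T)"
      by (rule of_nat_count_list_map[OF finite_x_trees])
  qed
  finally show ?thesis .
qed

lemma coeff_prod_update_ddx:
  fixes fs :: "('k::field) ser list"
  assumes fs: "\<forall>f\<in>set fs. x_ser f" and j: "j < length fs"
    and Ts: "length Ts = length fs" "nleavesP (Ts ! j) < N"
  shows "coeff_prod (fs[j := ddx (fs ! j)]) Ts
       = (\<Sum>V\<in>x_trees N. coeff_prod fs (Ts[j := V]) * of_nat (count_list (leaf_deletionsP V) (Ts ! j)))"
proof -
  have "ddx (fs ! j) (Ts ! j) = (\<Sum>V\<in>x_trees N. (fs ! j) V * of_nat (count_list (leaf_deletionsP V) (Ts ! j)))"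
    using fs j Ts(2) by (intro ddx_eq_sum[OF _ finite_x_trees]) (auto simp: x_trees_def)
  moreover have "coeff_prod fs (Ts[j := V]) = (fs ! j) V * coeff_prod_except fs j Ts" for V
    using coeff_prod_split[OF j, of "Ts[j := V]"] j Ts(1) by (simp add: coeff_prod_except_update)
  ultimately show ?thesis
    using coeff_prod_update[OF j] by (simp add: sum_distrib_left sum_distrib_right ac_simps)
qed

lemma ser_prod_update_ddx_eq_sum:
  fixes fs :: "('k::field) ser list" and T :: "ptree option"
  assumes fs: "\<forall>f\<in>set fs. x_ser f" and j: "j < length fs"
  defines "N \<equiv> nleavesP T + 1"
  shows "ser_prod (fs[j := ddx (fs ! j)]) T
       = (\<Sum>Us\<in>x_tree_lists N (length fs). \<Sum>W\<in>x_trees N. coeff_prod fs Us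
            * (of_nat (count_list (leaf_deletionsP (Us ! j)) W) * tree_ser (bulletP (Us[j := W])) T))"
proof -
  let ?C = "x_trees N" and ?L = "x_tree_lists N (length fs)"
  have fs': "\<forall>f\<in>set (fs[j := ddx (fs ! j)]). x_ser f"
    using fs j x_ser_ddx[of "fs ! j"] set_update_subset_insert[of fs j "ddx (fs ! j)"] by auto
  have "ser_prod (fs[j := ddx (fs ! j)]) T
      = (\<Sum>Ts\<in>?L. coeff_prod (fs[j := ddx (fs ! j)]) Ts * tree_ser (bulletP Ts) T)"
    using ser_prod_eq_sum_x_tree_lists[OF fs', of T N] by (simp add: N_def)
  also have "\<dots> = (\<Sum>Ts\<in>?L. \<Sum>V\<in>?C. coeff_prod fs (Ts[j := V])
      * (of_nat (count_list (leaf_deletionsP V) (Ts ! j)) * tree_ser (bulletP Ts) T))"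
  proof (rule sum.cong[OF refl])
    fix Ts assume Ts: "Ts \<in> ?L"
    then have len: "length Ts = length fs" by (simp add: x_tree_lists_def)
    show "coeff_prod (fs[j := ddx (fs ! j)]) Ts * tree_ser (bulletP Ts) T
        = (\<Sum>V\<in>?C. coeff_prod fs (Ts[j := V])
            * (of_nat (count_list (leaf_deletionsP V) (Ts ! j)) * tree_ser (bulletP Ts) T))"
    proof (cases "bulletP Ts = T")
      case True
      then have "nleavesP (Ts ! j) < N" using nleavesP_le_bulletP[of j Ts] j len by (simp add: N_def)
      then show ?thesis
        using True coeff_prod_update_ddx[OF fs j len] by (simp add: tree_ser_def sum_distrib_right)
    next
      case False
      then have "tree_ser (bulletP Ts) T = (0 :: 'k)" by (auto simp: tree_ser_def)
      then show ?thesis by simp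
    qed
  qed
  also have "\<dots> = (\<Sum>Us\<in>?L. \<Sum>W\<in>?C. coeff_prod fs (Us[j := W, j := Us ! j])
      * (of_nat (count_list (leaf_deletionsP (Us ! j)) (Us[j := W] ! j)) * tree_ser (bulletP (Us[j := W])) T))"
    by (rule sum_x_tree_lists_swap_update[OF j])
  also have "\<dots> = (\<Sum>Us\<in>?L. \<Sum>W\<in>?C. coeff_prod fs Us
      * (of_nat (count_list (leaf_deletionsP (Us ! j)) W) * tree_ser (bulletP (Us[j := W])) T))"
    using j by (intro sum.cong refl) (auto simp: x_tree_lists_def)
  finally show ?thesis .
qed

theorem ddx_ser_prod:
  fixes fs :: "('k::field) ser list"
  assumes fs: "\<forall>f\<in>set fs. x_ser f"
  shows "ddx (ser_prod fs) T = (\<Sum>j<length fs. ser_prod (fs[j := ddx (fs ! j)]) T)"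
proof -
  define N where "N = nleavesP T + 1"
  let ?C = "x_trees N" and ?L = "x_tree_lists N (length fs)"
  let ?G = "\<lambda>j Us W. coeff_prod fs Us
    * (of_nat (count_list (leaf_deletionsP (Us ! j)) W) * tree_ser (bulletP (Us[j := W])) T)"
  have "ddx (ser_prod fs) T
      = (\<Sum>Us\<in>?L. coeff_prod fs Us * of_nat (count_list (leaf_deletionsP (bulletP Us)) T))"
    unfolding N_def by (rule ddx_ser_prod_eq_sum[OF fs])
  also have "\<dots> = (\<Sum>Us\<in>?L. \<Sum>j<length fs. \<Sum>W\<in>?C. ?G j Us W)"
    by (intro sum.cong refl) (simp add: count_leaf_deletionsP_bulletP sum_distrib_left)
  also have "\<dots> = (\<Sum>j<length fs. \<Sum>Us\<in>?L. \<Sum>W\<in>?C. ?G j Us W)"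
    by (rule sum.swap)
  also have "\<dots> = (\<Sum>j<length fs. ser_prod (fs[j := ddx (fs ! j)]) T)"
    by (intro sum.cong refl) (simp add: ser_prod_update_ddx_eq_sum[OF fs] N_def)
  finally show ?thesis .
qed

section \<open>The chain rule\<close>

lemma sum_list_concat: "sum_list (concat xss) = sum_list (map sum_list xss)"
  by (induct xss) auto

lemma sum_list_map_upt_0: "sum_list (map f [0..<n]) = (\<Sum>k<n. f k)"
  by (induct n) auto

lemma sum_list_leaf_deletions_Node:
  assumes "\<forall>t\<in>set ts. reduced t \<and> LY \<notin> set (leaves t)"
  shows "sum_list (map H (leaf_deletions (Node ts)))
       = (\<Sum>j<length ts. sum_list (map (\<lambda>S. H (bulletP ((map Some ts)[j := S]))) (leaf_deletions (ts ! j))))"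
  using assms by (simp add: leaf_deletions_Node map_concat sum_list_concat comp_def sum_list_map_upt_0)

text \<open>The hypothesis \<open>g' = 1 + g\<close> enters only at the leaves; the Leibniz rule
  propagates it through the nodes.\<close>

lemma ddx_phi_tree:
  fixes g :: "('k::field) ser"
  assumes g: "x_ser g" "ordx_ge g 1" "ddx g = ser_add oneP g"
    and t: "reduced t" "LY \<notin> set (leaves t)"
  shows "ddx (phi_tree g ser_zero t) T
    = sum_list (map (\<lambda>S. phi_P g ser_zero S T) (leaf_deletions t))
      + of_nat (length (leaves t)) * phi_tree g ser_zero t T"
  using t
proof (induct t arbitrary: T)
  case (Leaf l)
  then show ?case using g(3) by (cases l) (simp_all add: leaf_deletions_def ser_add_def phi_P_def)
next
  case (Node ts)
  let ?G = "phi_tree g ser_zero" and ?P = "phi_P g ser_zero"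
  let ?fs = "map ?G ts"
  have ts: "reduced t" "LY \<notin> set (leaves t)" if "t \<in> set ts" for t
    using Node.prems that by auto
  have fs: "\<forall>f\<in>set ?fs. x_ser f"
    using x_ser_phi_tree[OF g(1,2)] by auto
  have wf: "wf_ser g" "wf_ser ser_zero"
    using x_ser_wf_ser[OF g(1)] by (auto simp: wf_ser_def ser_zero_def)
  have "ddx (?G (Node ts)) T = (\<Sum>j<length ts. ser_prod (?fs[j := ddx (?fs ! j)]) T)"
    using ddx_ser_prod[OF fs, of T] by simp
  also have "\<dots> = (\<Sum>j<length ts.
        sum_list (map (\<lambda>S. ?P (bulletP ((map Some ts)[j := S])) T) (leaf_deletions (ts ! j)))
        + of_nat (length (leaves (ts ! j))) * ?G (Node ts) T)"
  proof (rule sum.cong[OF refl])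
    fix j assume "j \<in> {..<length ts}"
    then have j: "j < length ts" by simp
    have "ddx (?G (ts ! j)) = (\<lambda>T. sum_list (map (\<lambda>S. ?P S T) (leaf_deletions (ts ! j)))
        + of_nat (length (leaves (ts ! j))) * ?G (ts ! j) T)"
      using Node.hyps[of "ts ! j"] ts[of "ts ! j"] j by auto
    then show "ser_prod (?fs[j := ddx (?fs ! j)]) T
        = sum_list (map (\<lambda>S. ?P (bulletP ((map Some ts)[j := S])) T) (leaf_deletions (ts ! j)))
          + of_nat (length (leaves (ts ! j))) * ?G (Node ts) T"
      using ser_prod_update_phi_tree[OF wf j] j by simp
  qed
  also have "\<dots> = (\<Sum>j<length ts.
        sum_list (map (\<lambda>S. ?P (bulletP ((map Some ts)[j := S])) T) (leaf_deletions (ts ! j))))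
      + (\<Sum>j<length ts. of_nat (length (leaves (ts ! j)))) * ?G (Node ts) T"
    by (simp add: sum.distrib sum_distrib_right)
  also have "(\<Sum>j<length ts.
        sum_list (map (\<lambda>S. ?P (bulletP ((map Some ts)[j := S])) T) (leaf_deletions (ts ! j))))
      = sum_list (map (\<lambda>S. ?P S T) (leaf_deletions (Node ts)))"
    using ts by (simp add: sum_list_leaf_deletions_Node)
  also have "(\<Sum>j<length ts. (of_nat (length (leaves (ts ! j))) :: 'k)) = of_nat (length (leaves (Node ts)))"
    by (simp add: length_concat_map_nth)
  finally show ?case .
qed

lemma ddx_phi_P:
  fixes g :: "('k::field) ser"
  assumes g: "x_ser g" "ordx_ge g 1" "ddx g = ser_add oneP g" and S: "wfP S" "only_x S"
  shows "ddx (phi_P g ser_zero S) T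
    = sum_list (map (\<lambda>S'. phi_P g ser_zero S' T) (leaf_deletionsP S))
      + of_nat (nleavesP S) * phi_P g ser_zero S T"
proof (cases S)
  case None
  then show ?thesis by (simp add: phi_P_def nleavesP_def ddx_oneP ser_zero_def)
next
  case (Some t)
  then show ?thesis using ddx_phi_tree[OF g] S by (simp add: phi_P_def nleavesP_def)
qed

lemma ddx_subst_eq_sum:
  fixes g :: "('k::field) ser"
  assumes g: "x_ser g" "ordx_ge g 1" and f: "x_ser f"
  shows "ddx (subst f g) T = (\<Sum>S\<in>x_trees (nleavesP T + 1). f S * ddx (phi_P g ser_zero S) T)"
proof -
  let ?A = "x_trees (nleavesP T + 1)" and ?P = "phi_P g ser_zero"
  let ?c = "\<lambda>V. (of_nat (count_list (leaf_deletionsP V) T) :: 'k)"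
  have "ddx (subst f g) T = (\<Sum>V\<in>?A. subst f g V * ?c V)"
    by (rule ddx_eq_sum_x_trees[OF x_ser_subst[OF g]])
  also have "\<dots> = (\<Sum>V\<in>?A. (\<Sum>S\<in>?A. f S * ?P S V) * ?c V)"
  proof (rule sum.cong[OF refl])
    fix V assume "V \<in> ?A"
    then have "subst f g V = (\<Sum>S\<in>?A. f S * ?P S V)"
      using f by (intro subst_eq_sum[OF g _ finite_x_trees]) (auto simp: x_ser_def x_trees_def)
    then show "subst f g V * ?c V = (\<Sum>S\<in>?A. f S * ?P S V) * ?c V" by simp
  qed
  also have "\<dots> = (\<Sum>S\<in>?A. f S * (\<Sum>V\<in>?A. ?P S V * ?c V))"
    by (simp add: sum_distrib_left sum_distrib_right mult.assoc) (rule sum.swap)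
  also have "\<dots> = (\<Sum>S\<in>?A. f S * ddx (?P S) T)"
    by (simp add: ddx_eq_sum_x_trees[OF x_ser_phi_P[OF g]])
  finally show ?thesis .
qed

lemma subst_ddx_eq_sum:
  fixes g :: "('k::field) ser"
  assumes g: "x_ser g" "ordx_ge g 1" and f: "x_ser f"
  shows "subst (ddx f) g T = (\<Sum>S\<in>x_trees (nleavesP T + 1).
           f S * sum_list (map (\<lambda>S'. phi_P g ser_zero S' T) (leaf_deletionsP S)))"
proof -
  let ?A = "x_trees (nleavesP T + 1)" and ?P = "phi_P g ser_zero"
  have "subst (ddx f) g T = (\<Sum>V\<in>?A. ddx f V * ?P V T)"
    using x_ser_ddx[OF f]
    by (intro subst_eq_sum[OF g _ finite_x_trees]) (auto simp: x_ser_def x_trees_def)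
  also have "\<dots> = (\<Sum>V\<in>?A. (\<Sum>S\<in>?A. f S * of_nat (count_list (leaf_deletionsP S) V)) * ?P V T)"
  proof (rule sum.cong[OF refl])
    fix V
    show "ddx f V * ?P V T = (\<Sum>S\<in>?A. f S * of_nat (count_list (leaf_deletionsP S) V)) * ?P V T"
    proof (cases "?P V T = 0")
      case False
      then have "nleavesP V \<le> nleavesP T" using phi_P_nonzero[OF g] by blast
      then have "ddx f V = (\<Sum>S\<in>?A. f S * of_nat (count_list (leaf_deletionsP S) V))"
        by (intro ddx_eq_sum[OF f finite_x_trees]) (auto simp: x_trees_def)
      then show ?thesis by simp
    qed simp
  qed
  also have "\<dots> = (\<Sum>S\<in>?A. f S * (\<Sum>V\<in>?A. of_nat (count_list (leaf_deletionsP S) V) * ?P V T))"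
    by (simp add: sum_distrib_left sum_distrib_right mult.assoc) (rule sum.swap)
  also have "\<dots> = (\<Sum>S\<in>?A. f S * sum_list (map (\<lambda>S'. ?P S' T) (leaf_deletionsP S)))"
  proof (rule sum.cong[OF refl])
    fix S assume "S \<in> ?A"
    then have "set (leaf_deletionsP S) \<subseteq> ?A" by (rule leaf_deletionsP_subset_x_trees)
    then show "f S * (\<Sum>V\<in>?A. of_nat (count_list (leaf_deletionsP S) V) * ?P V T)
        = f S * sum_list (map (\<lambda>S'. ?P S' T) (leaf_deletionsP S))"
      by (simp add: sum_list_eq_sum_count_list[OF finite_x_trees])
  qed
  finally show ?thesis .
qed

lemma subst_hder_xser_eq_sum:
  fixes g :: "('k::field) ser"
  assumes g: "x_ser g" "ordx_ge g 1" and f: "x_ser f"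
  shows "subst (hder xser f) g T
    = (\<Sum>S\<in>x_trees (nleavesP T + 1). f S * (of_nat (nleavesP S) * phi_P g ser_zero S T))"
proof -
  have "subst (hder xser f) g T
      = (\<Sum>S\<in>x_trees (nleavesP T + 1). hder xser f S * phi_P g ser_zero S T)"
    using x_ser_hder_xser[OF f]
    by (intro subst_eq_sum[OF g _ finite_x_trees]) (auto simp: x_ser_def x_trees_def)
  then show ?thesis by (simp add: hder_xser[OF f] ac_simps)
qed

theorem ddx_subst:
  fixes g :: "('k::field) ser"
  assumes g: "x_ser g" "ordx_ge g 1" "ddx g = ser_add oneP g" and f: "x_ser f"
  shows "ddx (subst f g) = ser_add (subst (ddx f) g) (subst (hder xser f) g)"
proof
  fix T
  let ?A = "x_trees (nleavesP T + 1)"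
  have "ddx (subst f g) T = (\<Sum>S\<in>?A. f S * ddx (phi_P g ser_zero S) T)"
    by (rule ddx_subst_eq_sum[OF g(1,2) f])
  also have "\<dots> = (\<Sum>S\<in>?A. f S * sum_list (map (\<lambda>S'. phi_P g ser_zero S' T) (leaf_deletionsP S))
      + f S * (of_nat (nleavesP S) * phi_P g ser_zero S T))"
    by (intro sum.cong refl) (simp add: ddx_phi_P[OF g] x_trees_def distrib_left)
  also have "\<dots> = subst (ddx f) g T + subst (hder xser f) g T"
    by (simp add: sum.distrib subst_ddx_eq_sum[OF g(1,2) f] subst_hder_xser_eq_sum[OF g(1,2) f])
  finally show "ddx (subst f g) T = ser_add (subst (ddx f) g) (subst (hder xser f) g) T"
    by (simp add: ser_add_def)
qed

theorem proposition7p1: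
  fixes g :: "('k::field) ser"
  assumes "g \<in> KX" and "ordx_ge g 1" and "ddx g = ser_add oneP g"
  shows "\<forall>f\<in>KX.
           ddx (subst f g) = ser_add (subst (ddx f) g) (subst (hder xser f) g) \<and>
           ddx (subst f g) = subst (hder (ser_add oneP xser) f) g"
proof
  fix f :: "'k ser" assume "f \<in> KX"
  then have f: "x_ser f" by (rule KX_imp_x_ser)
  have g: "x_ser g" "ordx_ge g 1" "ddx g = ser_add oneP g"
    using assms KX_imp_x_ser by auto
  have "subst (hder (ser_add oneP xser) f) g = ser_add (subst (ddx f) g) (subst (hder xser f) g)"
    using subst_ser_add[OF g(1,2) x_ser_ddx[OF f] x_ser_hder_xser[OF f]]
    by (simp add: hder_oneP_plus_xser[OF f])
  then show "ddx (subst f g) = ser_add (subst (ddx f) g) (subst (hder xser f) g) \<and>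
             ddx (subst f g) = subst (hder (ser_add oneP xser) f) g"
    using ddx_subst[OF g f] by simp
qed

end
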